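(* Let $T=A+\mathrm iB$ and $S=U+\mathrm iV$, where $A,B,U,V$ are symmetric operators in $H$ (with $\operatorname{dom}(T)=\operatorname{dom}(A)\cap\operatorname{dom}(B)$, $\operatorname{dom}(S)=\operatorname{dom}(U)\cap\operatorname{dom}(V)$), and assume one of the following: (i) $A$ is selfadjoint and semibounded, and $U,V$ are $A$-compact; or (ii) $B$ is selfadjoint and semibounded, and $U,V$ are $B$-compact; or (iii) $A$ and $B$ are selfadjoint and semibounded, $U$ is $A$-compact and $V$ is $B$-compact. Then $W_e(T)=W_e(T+S)$.
   Context: $H$ is a separable infinite-dimensional complex Hilbert space. $W_e(T)=\{\lambda:\exists x_n\in\operatorname{dom}(T),\|x_n\|=1,x_n\stackrel{w}{\to}0,\langle Tx_n,x_n\rangle\to\lambda\}$. An operator $U$ is $A$-compact if $\operatorname{dom}(A)\subset\operatorname{dom}(U)$ and $U$ maps every sequence $(x_n)$ with $(x_n)$ and $(Ax_n)$ bounded to a sequence having a convergent subsequence. $T+S$ has domain $\operatorname{dom}(T)\cap\operatorname{dom}(S)$. *)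

theory Defs
  imports "HOL-Analysis.Analysis"
begin

text \<open>Concrete model of the separable infinite-dimensional complex Hilbert space H:
  the sequence space l2(N), vectors are functions nat => complex.\<close>

type_synonym vec = "nat \<Rightarrow> complex"
type_synonym op = "vec set \<times> (vec \<Rightarrow> vec)"

definition l2 :: "vec set" where
  "l2 = {x. summable (\<lambda>n. (cmod (x n))\<^sup>2)}"

definition vzero :: vec where "vzero = (\<lambda>n. 0)"
definition vadd :: "vec \<Rightarrow> vec \<Rightarrow> vec" where "vadd x y = (\<lambda>n. x n + y n)"
definition vsub :: "vec \<Rightarrow> vec \<Rightarrow> vec" where "vsub x y = (\<lambda>n. x n - y n)"
definition smul :: "complex \<Rightarrow> vec \<Rightarrow> vec" where "smul c x = (\<lambda>n. c * x n)"

text \<open>Inner product, linear in the first argument.\<close>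
definition ip :: "vec \<Rightarrow> vec \<Rightarrow> complex" where
  "ip x y = (\<Sum>n. x n * cnj (y n))"

definition vnorm :: "vec \<Rightarrow> real" where
  "vnorm x = sqrt (\<Sum>n. (cmod (x n))\<^sup>2)"

definition opdom :: "op \<Rightarrow> vec set" where "opdom T = fst T"
definition app :: "op \<Rightarrow> vec \<Rightarrow> vec" where "app T x = snd T x"

definition is_operator :: "op \<Rightarrow> bool" where
  "is_operator T \<longleftrightarrow> opdom T \<subseteq> l2 \<and> vzero \<in> opdom T \<and>
     (\<forall>x\<in>opdom T. \<forall>y\<in>opdom T. vadd x y \<in> opdom T \<and> app T (vadd x y) = vadd (app T x) (app T y)) \<and>
     (\<forall>c. \<forall>x\<in>opdom T. smul c x \<in> opdom T \<and> app T (smul c x) = smul c (app T x)) \<and>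
     app T ` opdom T \<subseteq> l2"

definition densely_defined :: "op \<Rightarrow> bool" where
  "densely_defined T \<longleftrightarrow> (\<forall>x\<in>l2. \<forall>e>0. \<exists>y\<in>opdom T. vnorm (vsub x y) < e)"

definition symmetric_op :: "op \<Rightarrow> bool" where
  "symmetric_op T \<longleftrightarrow> is_operator T \<and> densely_defined T \<and>
     (\<forall>x\<in>opdom T. \<forall>y\<in>opdom T. ip (app T x) y = ip x (app T y))"

definition adj_dom :: "op \<Rightarrow> vec set" where
  "adj_dom T = {y\<in>l2. \<exists>z\<in>l2. \<forall>x\<in>opdom T. ip (app T x) y = ip x z}"

text \<open>Selfadjoint: symmetric with dom(T*) = dom(T) (so T* = T by density).\<close>
definition selfadjoint_op :: "op \<Rightarrow> bool" where
  "selfadjoint_op T \<longleftrightarrow> symmetric_op T \<and> adj_dom T \<subseteq> opdom T"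

definition semibounded :: "op \<Rightarrow> bool" where
  "semibounded T \<longleftrightarrow> (\<exists>c::real.
      (\<forall>x\<in>opdom T. c * (vnorm x)\<^sup>2 \<le> Re (ip (app T x) x)) \<or>
      (\<forall>x\<in>opdom T. Re (ip (app T x) x) \<le> c * (vnorm x)\<^sup>2))"

definition bounded_seq :: "(nat \<Rightarrow> vec) \<Rightarrow> bool" where
  "bounded_seq x \<longleftrightarrow> (\<exists>M. \<forall>n. vnorm (x n) \<le> M)"

definition has_conv_subseq :: "(nat \<Rightarrow> vec) \<Rightarrow> bool" where
  "has_conv_subseq y \<longleftrightarrow> (\<exists>r L. strict_mono r \<and> L \<in> l2 \<and>
      (\<lambda>n. vnorm (vsub (y (r n)) L)) \<longlonglongrightarrow> 0)"

definition rel_compact :: "op \<Rightarrow> op \<Rightarrow> bool" where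
  "rel_compact U A \<longleftrightarrow> opdom A \<subseteq> opdom U \<and>
     (\<forall>x. (\<forall>n. x n \<in> opdom A) \<and> bounded_seq x \<and> bounded_seq (\<lambda>n. app A (x n))
          \<longrightarrow> has_conv_subseq (\<lambda>n. app U (x n)))"

definition op_re_im :: "op \<Rightarrow> op \<Rightarrow> op" where
  "op_re_im A B = (opdom A \<inter> opdom B, \<lambda>x. vadd (app A x) (smul \<i> (app B x)))"

definition op_plus :: "op \<Rightarrow> op \<Rightarrow> op" where
  "op_plus T S = (opdom T \<inter> opdom S, \<lambda>x. vadd (app T x) (app S x))"

definition weak_to_zero :: "(nat \<Rightarrow> vec) \<Rightarrow> bool" where
  "weak_to_zero x \<longleftrightarrow> (\<forall>y\<in>l2. (\<lambda>n. ip (x n) y) \<longlonglongrightarrow> 0)"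

definition ess_num_range :: "op \<Rightarrow> complex set" where
  "ess_num_range T = {l. \<exists>x. (\<forall>n. x n \<in> opdom T \<and> vnorm (x n) = 1) \<and> weak_to_zero x \<and>
      (\<lambda>n. ip (app T (x n)) (x n)) \<longlonglongrightarrow> l}"

end

theory Submission
  imports Defs
begin

text \<open>Since \<open>A, B, U, V\<close> are symmetric, \<open>\<langle>T x, x\<rangle> = \<langle>A x, x\<rangle> + i \<langle>B x, x\<rangle>\<close> with real
  summands, and likewise for \<open>S\<close>. The two essential numerical ranges therefore agree once
  \<open>\<langle>U x\<^sub>n, x\<^sub>n\<rangle> \<rightarrow> 0\<close> and \<open>\<langle>V x\<^sub>n, x\<^sub>n\<rangle> \<rightarrow> 0\<close> along every weakly null unit sequence
  on which \<open>\<langle>T x\<^sub>n, x\<^sub>n\<rangle>\<close> or \<open>\<langle>(T + S) x\<^sub>n, x\<^sub>n\<rangle>\<close> stays bounded.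

  Let \<open>C\<close> be selfadjoint and semibounded and \<open>U\<close> be \<open>C\<close>-compact. After an affine change
  \<open>C' = s C + c\<close> with \<open>|s| = 1\<close> we may assume \<open>C' \<ge> 1\<close>; by the projection theorem \<open>C'\<close> is then
  invertible. Compactness gives \<open>\<parallel>U x\<parallel> \<le> \<epsilon> \<parallel>C' x\<parallel> + D\<^sub>\<epsilon> \<parallel>x\<parallel>\<close> for every \<open>\<epsilon> > 0\<close>,
  and a Heinz-type inequality turns this into the form bound
  \<open>|\<langle>U x, x\<rangle>| \<le> \<epsilon> \<langle>C' x, x\<rangle> + D'\<^sub>\<epsilon> \<parallel>x\<parallel>\<^sup>2\<close>. With \<open>\<epsilon> = 1/2\<close> this shows that
  \<open>\<langle>C x\<^sub>n, x\<^sub>n\<rangle>\<close> is bounded whenever \<open>\<langle>(C + U) x\<^sub>n, x\<^sub>n\<rangle>\<close> is; and if \<open>\<langle>C x\<^sub>n, x\<^sub>n\<rangle>\<close>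
  is bounded and \<open>x\<^sub>n\<close> is weakly null, then \<open>\<langle>U x\<^sub>n, x\<^sub>n\<rangle> \<rightarrow> 0\<close>. In the three cases of
  the theorem, \<open>C\<close> is \<open>A\<close> or \<open>B\<close>, read off from the real or imaginary part.\<close>

section \<open>The Hilbert space l2\<close>

lemma norm_mult_cnj_le: "cmod (a * cnj b) \<le> (cmod a)\<^sup>2 + (cmod b)\<^sup>2"
proof -
  have "2 * cmod a * cmod b \<le> (cmod a)\<^sup>2 + (cmod b)\<^sup>2" by (rule sum_squares_bound)
  moreover have "0 \<le> cmod a * cmod b" by simp
  ultimately have "cmod a * cmod b \<le> (cmod a)\<^sup>2 + (cmod b)\<^sup>2" by linarith
  then show ?thesis by (simp add: norm_mult)
qed

lemma summable_ip:
  assumes "x \<in> l2" "y \<in> l2"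
  shows "summable (\<lambda>n. x n * cnj (y n))"
proof (rule summable_norm_cancel, rule summable_comparison_test)
  show "\<exists>N. \<forall>n\<ge>N. norm (norm (x n * cnj (y n))) \<le> (cmod (x n))\<^sup>2 + (cmod (y n))\<^sup>2"
    using norm_mult_cnj_le by auto
  show "summable (\<lambda>n. (cmod (x n))\<^sup>2 + (cmod (y n))\<^sup>2)"
    using assms by (auto simp: l2_def intro!: summable_add)
qed

lemma l2_vzero [simp]: "vzero \<in> l2"
  by (simp add: l2_def vzero_def)

lemma l2_vadd [simp]:
  assumes "x \<in> l2" "y \<in> l2"
  shows "vadd x y \<in> l2"
proof -
  have bound: "(cmod (x n + y n))\<^sup>2 \<le> 2 * (cmod (x n))\<^sup>2 + 2 * (cmod (y n))\<^sup>2" for n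
  proof -
    have "(cmod (x n + y n))\<^sup>2 \<le> (cmod (x n) + cmod (y n))\<^sup>2"
      by (simp add: norm_triangle_ineq power_mono)
    also have "\<dots> \<le> 2 * (cmod (x n))\<^sup>2 + 2 * (cmod (y n))\<^sup>2"
      using sum_squares_bound[of "cmod (x n)" "cmod (y n)"] by (simp add: power2_sum)
    finally show ?thesis .
  qed
  have "summable (\<lambda>n. 2 * (cmod (x n))\<^sup>2 + 2 * (cmod (y n))\<^sup>2)"
    using assms unfolding l2_def by (intro summable_add summable_mult) simp_all
  then show ?thesis
    unfolding l2_def vadd_def mem_Collect_eq
    by (rule summable_comparison_test') (simp add: bound)
qed

lemma l2_smul [simp]: "x \<in> l2 \<Longrightarrow> smul c x \<in> l2"
  unfolding l2_def smul_def by (simp add: norm_mult power_mult_distrib summable_mult)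

lemma vsub_conv_vadd: "vsub x y = vadd x (smul (-1) y)"
  by (simp add: vsub_def vadd_def smul_def fun_eq_iff)

lemma l2_vsub [simp]: "x \<in> l2 \<Longrightarrow> y \<in> l2 \<Longrightarrow> vsub x y \<in> l2"
  by (simp add: vsub_conv_vadd)

lemma vsub_vzero [simp]: "vsub x vzero = x"
  by (simp add: vsub_def vzero_def)

lemma smul_one [simp]: "smul 1 x = x"
  by (simp add: smul_def)

lemma ip_vadd_left: "x \<in> l2 \<Longrightarrow> y \<in> l2 \<Longrightarrow> z \<in> l2 \<Longrightarrow> ip (vadd x y) z = ip x z + ip y z"
  unfolding ip_def vadd_def by (simp add: distrib_right suminf_add[OF summable_ip summable_ip])

lemma ip_smul_left: "x \<in> l2 \<Longrightarrow> y \<in> l2 \<Longrightarrow> ip (smul c x) y = c * ip x y"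
  unfolding ip_def smul_def using suminf_mult[OF summable_ip, of x y c] by (simp add: mult.assoc)

lemma cnj_ip: "x \<in> l2 \<Longrightarrow> y \<in> l2 \<Longrightarrow> cnj (ip x y) = ip y x"
proof -
  assume "x \<in> l2" "y \<in> l2"
  then have "(\<lambda>n. cnj (x n * cnj (y n))) sums cnj (ip x y)"
    unfolding ip_def sums_cnj by (intro summable_sums summable_ip)
  then show ?thesis
    unfolding ip_def by (simp add: mult.commute sums_unique)
qed

lemma ip_vadd_right: "x \<in> l2 \<Longrightarrow> y \<in> l2 \<Longrightarrow> z \<in> l2 \<Longrightarrow> ip z (vadd x y) = ip z x + ip z y"
  using cnj_ip[of "vadd x y" z] cnj_ip[of x z] cnj_ip[of y z] by (simp add: ip_vadd_left)

lemma ip_smul_right: "x \<in> l2 \<Longrightarrow> y \<in> l2 \<Longrightarrow> ip y (smul c x) = cnj c * ip y x"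
  using cnj_ip[of "smul c x" y] cnj_ip[of x y] by (simp add: ip_smul_left)

lemma ip_vsub_left: "x \<in> l2 \<Longrightarrow> y \<in> l2 \<Longrightarrow> z \<in> l2 \<Longrightarrow> ip (vsub x y) z = ip x z - ip y z"
  by (simp add: vsub_conv_vadd ip_vadd_left ip_smul_left)

lemma ip_vsub_right: "x \<in> l2 \<Longrightarrow> y \<in> l2 \<Longrightarrow> z \<in> l2 \<Longrightarrow> ip z (vsub x y) = ip z x - ip z y"
  by (simp add: vsub_conv_vadd ip_vadd_right ip_smul_right)

lemma ip_vzero_left [simp]: "ip vzero y = 0"
  by (simp add: ip_def vzero_def)

lemma ip_vzero_right [simp]: "ip y vzero = 0"
  by (simp add: ip_def vzero_def)

lemma vnorm_power2: "x \<in> l2 \<Longrightarrow> (vnorm x)\<^sup>2 = (\<Sum>n. (cmod (x n))\<^sup>2)"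
  unfolding vnorm_def l2_def by (simp add: suminf_nonneg)

lemma vnorm_nonneg [simp]: "x \<in> l2 \<Longrightarrow> 0 \<le> vnorm x"
  unfolding vnorm_def l2_def by (simp add: suminf_nonneg)

lemma ip_self:
  assumes "x \<in> l2"
  shows "ip x x = complex_of_real ((vnorm x)\<^sup>2)"
proof -
  have "ip x x = (\<Sum>n. complex_of_real ((cmod (x n))\<^sup>2))"
    unfolding ip_def by (simp only: complex_norm_square)
  also have "\<dots> = complex_of_real (\<Sum>n. (cmod (x n))\<^sup>2)"
    using assms by (intro suminf_of_real [symmetric]) (simp add: l2_def)
  finally show ?thesis
    using vnorm_power2[OF assms] by simp
qed

lemma Re_ip_self [simp]: "x \<in> l2 \<Longrightarrow> Re (ip x x) = (vnorm x)\<^sup>2"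
  by (simp add: ip_self)

lemma vnorm_eq_0_iff:
  assumes "x \<in> l2"
  shows "vnorm x = 0 \<longleftrightarrow> x = vzero"
proof -
  have "vnorm x = 0 \<longleftrightarrow> (\<Sum>n. (cmod (x n))\<^sup>2) = 0"
    using vnorm_power2[OF assms] assms by (metis power_zero_numeral vnorm_nonneg zero_eq_power2)
  also have "\<dots> \<longleftrightarrow> x = vzero"
    using assms by (simp add: l2_def suminf_eq_zero_iff vzero_def fun_eq_iff)
  finally show ?thesis .
qed

lemma cmod_power2_le_of_quadratic_nonneg:
  fixes p q :: real and b :: complex
  assumes quadratic_nonneg: "\<And>s. 0 \<le> p - 2 * Re (cnj s * b) + (cmod s)\<^sup>2 * q" and "0 \<le> q"
  shows "(cmod b)\<^sup>2 \<le> p * q"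
proof (cases "q = 0")
  case True
  show ?thesis
  proof (rule ccontr)
    assume "\<not> ?thesis"
    then have b: "(cmod b)\<^sup>2 > 0" using True by simp
    define t where "t = (\<bar>p\<bar> + 1) / (2 * (cmod b)\<^sup>2)"
    have "Re (cnj (complex_of_real t * b) * b) = t * (cmod b)\<^sup>2"
      unfolding cmod_power2 by (simp add: power2_eq_square algebra_simps)
    moreover have "2 * (t * (cmod b)\<^sup>2) = \<bar>p\<bar> + 1" using b by (simp add: t_def)
    moreover have "0 \<le> p - 2 * Re (cnj (complex_of_real t * b) * b)"
      using quadratic_nonneg[of "complex_of_real t * b"] True by simp
    ultimately show False by linarith
  qed
next
  case False
  with \<open>0 \<le> q\<close> have q: "q > 0" by simp
  define s where "s = b / complex_of_real q"
  have "cnj s * b = (b * cnj b) / complex_of_real q"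
    by (simp add: s_def mult.commute)
  also have "\<dots> = complex_of_real ((cmod b)\<^sup>2 / q)"
    by (simp only: complex_norm_square[symmetric] of_real_divide)
  finally have "cnj s * b = complex_of_real ((cmod b)\<^sup>2 / q)" .
  moreover have "(cmod s)\<^sup>2 * q = (cmod b)\<^sup>2 / q"
    using q by (simp add: s_def norm_divide power_divide power2_eq_square)
  ultimately have "0 \<le> p - (cmod b)\<^sup>2 / q" using quadratic_nonneg[of s] by simp
  then show ?thesis using q by (simp add: field_simps)
qed

lemma ip_vsub_smul_vsub_smul:
  assumes "a \<in> l2" "b \<in> l2" "c \<in> l2" "d \<in> l2"
  shows "ip (vsub a (smul s b)) (vsub c (smul s d)) =
    ip a c - cnj s * ip a d - s * ip b c + s * cnj s * ip b d"
  using assms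
  by (simp add: ip_vsub_left ip_vsub_right ip_smul_left ip_smul_right algebra_simps)

lemma Re_ip_vsub_smul_self:
  assumes x: "x \<in> l2" and y: "y \<in> l2"
  shows "Re (ip (vsub x (smul s y)) (vsub x (smul s y))) =
    (vnorm x)\<^sup>2 - 2 * Re (cnj s * ip x y) + (cmod s)\<^sup>2 * (vnorm y)\<^sup>2"
proof -
  have "s * ip y x = cnj (cnj s * ip x y)"
    by (simp add: cnj_ip[OF x y, symmetric])
  then have "Re (s * ip y x) = Re (cnj s * ip x y)"
    by (simp only: cnj.sel)
  moreover have "s * cnj s * ip y y = complex_of_real ((cmod s)\<^sup>2 * (vnorm y)\<^sup>2)"
    by (simp only: ip_self[OF y] complex_norm_square[symmetric] of_real_mult)
  ultimately show ?thesis
    by (simp add: ip_vsub_smul_vsub_smul[OF x y x y] x)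
qed

lemma ip_cauchy_schwarz:
  assumes "x \<in> l2" "y \<in> l2"
  shows "cmod (ip x y) \<le> vnorm x * vnorm y"
proof -
  have "(cmod (ip x y))\<^sup>2 \<le> (vnorm x)\<^sup>2 * (vnorm y)\<^sup>2"
  proof (rule cmod_power2_le_of_quadratic_nonneg)
    fix s
    show "0 \<le> (vnorm x)\<^sup>2 - 2 * Re (cnj s * ip x y) + (cmod s)\<^sup>2 * (vnorm y)\<^sup>2"
      using Re_ip_self[of "vsub x (smul s y)"] Re_ip_vsub_smul_self[OF assms, of s] assms by simp
  qed simp
  then have "(cmod (ip x y))\<^sup>2 \<le> (vnorm x * vnorm y)\<^sup>2"
    by (simp add: power_mult_distrib)
  then show ?thesis
    by (rule power2_le_imp_le) (simp add: assms)
qed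

lemma vnorm_vadd_power2:
  assumes "x \<in> l2" "y \<in> l2"
  shows "(vnorm (vadd x y))\<^sup>2 = (vnorm x)\<^sup>2 + 2 * Re (ip x y) + (vnorm y)\<^sup>2"
proof -
  have "ip (vadd x y) (vadd x y) = ip x x + ip x y + cnj (ip x y) + ip y y"
    using assms by (simp add: ip_vadd_left ip_vadd_right cnj_ip)
  then show ?thesis
    using assms Re_ip_self[of "vadd x y"] by simp
qed

lemma vnorm_vsub_power2:
  assumes "x \<in> l2" "y \<in> l2"
  shows "(vnorm (vsub x y))\<^sup>2 = (vnorm x)\<^sup>2 - 2 * Re (ip x y) + (vnorm y)\<^sup>2"
  using Re_ip_vsub_smul_self[OF assms, of 1] assms Re_ip_self[of "vsub x y"] by simp

lemma parallelogram_law: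
  assumes "x \<in> l2" "y \<in> l2"
  shows "(vnorm (vsub x y))\<^sup>2 + (vnorm (vadd x y))\<^sup>2 = 2 * (vnorm x)\<^sup>2 + 2 * (vnorm y)\<^sup>2"
  using vnorm_vsub_power2[OF assms] vnorm_vadd_power2[OF assms] by simp

lemma vnorm_triangle:
  assumes "x \<in> l2" "y \<in> l2"
  shows "vnorm (vadd x y) \<le> vnorm x + vnorm y"
proof -
  have "Re (ip x y) \<le> vnorm x * vnorm y"
    using ip_cauchy_schwarz[OF assms] complex_Re_le_cmod order_trans by blast
  then have "(vnorm (vadd x y))\<^sup>2 \<le> (vnorm x + vnorm y)\<^sup>2"
    using vnorm_vadd_power2[OF assms] by (simp add: power2_sum)
  then show ?thesis
    by (rule power2_le_imp_le) (simp add: assms)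
qed

lemma vnorm_smul:
  assumes "x \<in> l2"
  shows "vnorm (smul c x) = cmod c * vnorm x"
proof -
  have "ip (smul c x) (smul c x) = (c * cnj c) * ip x x"
    using assms by (simp add: ip_smul_left ip_smul_right mult.assoc)
  also have "\<dots> = complex_of_real ((cmod c * vnorm x)\<^sup>2)"
    by (simp only: ip_self[OF assms] power_mult_distrib of_real_mult complex_norm_square)
  finally have "(vnorm (smul c x))\<^sup>2 = (cmod c * vnorm x)\<^sup>2"
    using Re_ip_self[of "smul c x"] assms by simp
  then show ?thesis
    using assms by (simp add: power2_eq_iff_nonneg)
qed

lemma vnorm_vsub_commute: "vnorm (vsub x y) = vnorm (vsub y x)"
  by (simp add: vnorm_def vsub_def norm_minus_commute)

lemma vnorm_vsub_triangle:
  assumes "x \<in> l2" "y \<in> l2"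
  shows "vnorm (vsub x y) \<le> vnorm x + vnorm y"
  using vnorm_triangle[of x "smul (-1) y"] assms by (simp add: vsub_conv_vadd vnorm_smul)

lemma vnorm_le_vnorm_vsub:
  assumes "x \<in> l2" "y \<in> l2"
  shows "vnorm x \<le> vnorm (vsub x y) + vnorm y"
proof -
  have "x = vadd (vsub x y) y" by (simp add: vadd_def vsub_def)
  then show ?thesis using vnorm_triangle[of "vsub x y" y] assms by simp
qed

lemma coord_le_vnorm:
  assumes "x \<in> l2"
  shows "cmod (x n) \<le> vnorm x"
proof -
  have "(\<Sum>i\<in>{n}. (cmod (x i))\<^sup>2) \<le> (\<Sum>i. (cmod (x i))\<^sup>2)"
    using assms by (intro sum_le_suminf) (auto simp: l2_def)
  then have "(cmod (x n))\<^sup>2 \<le> (vnorm x)\<^sup>2"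
    using vnorm_power2[OF assms] by simp
  then show ?thesis
    by (rule power2_le_imp_le) (simp add: assms)
qed

lemma partial_sum_le_vnorm:
  assumes "x \<in> l2"
  shows "(\<Sum>i<m. (cmod (x i))\<^sup>2) \<le> (vnorm x)\<^sup>2"
  using assms unfolding vnorm_power2[OF assms] by (intro sum_le_suminf) (auto simp: l2_def)

section \<open>Convergence in l2\<close>

definition vtendsto :: "(nat \<Rightarrow> vec) \<Rightarrow> vec \<Rightarrow> bool" where
  "vtendsto x L \<longleftrightarrow> (\<lambda>n. vnorm (vsub (x n) L)) \<longlonglongrightarrow> 0"

definition vCauchy :: "(nat \<Rightarrow> vec) \<Rightarrow> bool" where
  "vCauchy x \<longleftrightarrow> (\<forall>e>0. \<exists>N. \<forall>j\<ge>N. \<forall>k\<ge>N. vnorm (vsub (x j) (x k)) < e)"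

lemma ip_vtendsto_left:
  assumes "\<And>n. x n \<in> l2" "L \<in> l2" "y \<in> l2" "vtendsto x L"
  shows "(\<lambda>n. ip (x n) y) \<longlonglongrightarrow> ip L y"
proof (rule LIM_zero_cancel, rule Lim_null_comparison)
  show "\<forall>\<^sub>F n in sequentially. norm (ip (x n) y - ip L y) \<le> vnorm (vsub (x n) L) * vnorm y"
    using assms ip_cauchy_schwarz[of "vsub (x _) L" y] by (simp add: ip_vsub_left[symmetric])
  show "(\<lambda>n. vnorm (vsub (x n) L) * vnorm y) \<longlonglongrightarrow> 0"
    using assms(4) unfolding vtendsto_def by (intro tendsto_mult_left_zero)
qed

lemma ip_vtendsto_right:
  assumes "\<And>n. x n \<in> l2" "L \<in> l2" "y \<in> l2" "vtendsto x L"
  shows "(\<lambda>n. ip y (x n)) \<longlonglongrightarrow> ip y L"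
  using tendsto_cnj[OF ip_vtendsto_left[OF assms]] assms by (simp add: cnj_ip)

lemma vnorm_vtendsto:
  assumes "\<And>n. x n \<in> l2" "L \<in> l2" "vtendsto x L"
  shows "(\<lambda>n. vnorm (x n)) \<longlonglongrightarrow> vnorm L"
proof (rule LIM_zero_cancel, rule Lim_null_comparison)
  have "norm (vnorm (x n) - vnorm L) \<le> vnorm (vsub (x n) L)" for n
    using assms vnorm_le_vnorm_vsub[of "x n" L] vnorm_le_vnorm_vsub[of L "x n"]
    by (simp add: vnorm_vsub_commute[of L])
  then show "\<forall>\<^sub>F n in sequentially. norm (vnorm (x n) - vnorm L) \<le> vnorm (vsub (x n) L)"
    by simp
  show "(\<lambda>n. vnorm (vsub (x n) L)) \<longlonglongrightarrow> 0"
    using assms(3) by (simp add: vtendsto_def)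
qed

lemma weak_to_zero_if_vtendsto_vzero:
  assumes "\<And>n. x n \<in> l2" "vtendsto x vzero"
  shows "weak_to_zero x"
  unfolding weak_to_zero_def using ip_vtendsto_left[OF assms(1) l2_vzero _ assms(2)] by simp

lemma vnorm_vsub_le_if_coordinatewise_limit:
  assumes x: "\<And>k. x k \<in> l2" and lim: "\<And>i. (\<lambda>k. x k i) \<longlonglongrightarrow> L i"
    and bound: "\<And>k. k \<ge> N \<Longrightarrow> vnorm (vsub (x j) (x k)) \<le> e"
  shows "vsub (x j) L \<in> l2" and "vnorm (vsub (x j) L) \<le> e"
proof -
  have "0 \<le> vnorm (vsub (x j) (x N))"
    using x by simp
  with bound[of N] have e: "0 \<le> e"
    by linarith
  have partial: "(\<Sum>i<m. (cmod (x j i - L i))\<^sup>2) \<le> e\<^sup>2" for m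
  proof (rule LIMSEQ_le_const2)
    show "(\<lambda>k. \<Sum>i<m. (cmod (x j i - x k i))\<^sup>2) \<longlonglongrightarrow> (\<Sum>i<m. (cmod (x j i - L i))\<^sup>2)"
      by (intro tendsto_intros lim)
    show "\<exists>N'. \<forall>k\<ge>N'. (\<Sum>i<m. (cmod (x j i - x k i))\<^sup>2) \<le> e\<^sup>2"
    proof (intro exI allI impI)
      fix k assume "N \<le> k"
      then have "(vnorm (vsub (x j) (x k)))\<^sup>2 \<le> e\<^sup>2"
        using bound x by (intro power_mono) simp_all
      moreover have "(\<Sum>i<m. (cmod (vsub (x j) (x k) i))\<^sup>2) \<le> (vnorm (vsub (x j) (x k)))\<^sup>2"
        using x by (intro partial_sum_le_vnorm) simp
      ultimately have "(\<Sum>i<m. (cmod (vsub (x j) (x k) i))\<^sup>2) \<le> e\<^sup>2"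
        by linarith
      then show "(\<Sum>i<m. (cmod (x j i - x k i))\<^sup>2) \<le> e\<^sup>2"
        by (simp add: vsub_def)
    qed
  qed
  then have summable: "summable (\<lambda>i. (cmod (x j i - L i))\<^sup>2)"
    by (intro summableI_nonneg_bounded[where x="e\<^sup>2"]) simp_all
  then show l2: "vsub (x j) L \<in> l2"
    by (simp add: l2_def vsub_def)
  have "(vnorm (vsub (x j) L))\<^sup>2 \<le> e\<^sup>2"
    unfolding vnorm_power2[OF l2] using suminf_le_const[OF summable partial] by (simp add: vsub_def)
  then show "vnorm (vsub (x j) L) \<le> e"
    by (rule power2_le_imp_le) (simp add: e)
qed

lemma Cauchy_coordinate_if_vCauchy:
  assumes x: "\<And>k. x k \<in> l2" and Cauchy: "vCauchy x"
  shows "Cauchy (\<lambda>k. x k i)"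
proof (rule metric_CauchyI)
  fix e :: real assume "e > 0"
  then obtain N where N: "\<forall>j\<ge>N. \<forall>k\<ge>N. vnorm (vsub (x j) (x k)) < e"
    using Cauchy by (auto simp: vCauchy_def)
  have "dist (x j i) (x k i) < e" if "j \<ge> N" "k \<ge> N" for j k
  proof -
    have "cmod (vsub (x j) (x k) i) \<le> vnorm (vsub (x j) (x k))"
      using x by (intro coord_le_vnorm) simp
    moreover have "vnorm (vsub (x j) (x k)) < e"
      using N that by blast
    ultimately have "cmod (vsub (x j) (x k) i) < e"
      by linarith
    then show ?thesis
      by (simp add: dist_norm vsub_def)
  qed
  then show "\<exists>N. \<forall>j\<ge>N. \<forall>k\<ge>N. dist (x j i) (x k i) < e"
    by blast
qed

theorem l2_complete:
  assumes x: "\<And>k. x k \<in> l2" and Cauchy: "vCauchy x"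
  shows "\<exists>L\<in>l2. vtendsto x L"
proof -
  define L where "L i = lim (\<lambda>k. x k i)" for i
  have lim: "(\<lambda>k. x k i) \<longlonglongrightarrow> L i" for i
    unfolding L_def using Cauchy_coordinate_if_vCauchy[OF x Cauchy, of i]
    by (simp add: Cauchy_convergent_iff convergent_LIMSEQ_iff)
  have tail: "vsub (x j) L \<in> l2 \<and> vnorm (vsub (x j) L) \<le> e"
    if N: "\<forall>j\<ge>N. \<forall>k\<ge>N. vnorm (vsub (x j) (x k)) < e" and "j \<ge> N" for e N j
  proof -
    have "vnorm (vsub (x j) (x k)) \<le> e" if "k \<ge> N" for k
      using N \<open>j \<ge> N\<close> that by (simp add: less_imp_le)
    then show ?thesis
      using vnorm_vsub_le_if_coordinatewise_limit[OF x lim] by blast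
  qed
  obtain N1 where "\<forall>j\<ge>N1. \<forall>k\<ge>N1. vnorm (vsub (x j) (x k)) < 1"
    using Cauchy zero_less_one unfolding vCauchy_def by blast
  then have "vsub (x N1) (vsub (x N1) L) \<in> l2"
    using tail[of N1 1 N1] x by simp
  moreover have "vsub (x N1) (vsub (x N1) L) = L"
    by (simp add: vsub_def)
  ultimately have L: "L \<in> l2" by simp
  have "vtendsto x L"
    unfolding vtendsto_def
  proof (rule LIMSEQ_I)
    fix r :: real assume "r > 0"
    then have "r / 2 > 0" by simp
    then obtain N where N: "\<forall>j\<ge>N. \<forall>k\<ge>N. vnorm (vsub (x j) (x k)) < r / 2"
      using Cauchy unfolding vCauchy_def by blast
    have "norm (vnorm (vsub (x n) L) - 0) < r" if "n \<ge> N" for n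
      using tail[OF N that] \<open>r > 0\<close> by simp
    then show "\<exists>N. \<forall>n\<ge>N. norm (vnorm (vsub (x n) L) - 0) < r"
      by blast
  qed
  with L show ?thesis by blast
qed

lemma LIMSEQ_if_subseqs_LIMSEQ:
  fixes f :: "nat \<Rightarrow> 'a::metric_space"
  assumes "\<And>r::nat \<Rightarrow> nat. strict_mono r \<Longrightarrow>
    \<exists>r'::nat \<Rightarrow> nat. strict_mono r' \<and> (\<lambda>n. f (r (r' n))) \<longlonglongrightarrow> L"
  shows "f \<longlonglongrightarrow> L"
proof (rule ccontr)
  assume "\<not> f \<longlonglongrightarrow> L"
  then obtain e where e: "e > 0" and "\<forall>N. \<exists>n\<ge>N. \<not> dist (f n) L < e"
    unfolding lim_sequentially by blast
  then have "infinite {n. \<not> dist (f n) L < e}"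
    by (simp add: infinite_nat_iff_unbounded_le)
  then obtain r :: "nat \<Rightarrow> nat" where r: "strict_mono r" "\<And>n. \<not> dist (f (r n)) L < e"
    using infinite_enumerate by blast
  obtain r' where "(\<lambda>n. f (r (r' n))) \<longlonglongrightarrow> L"
    using assms[OF r(1)] by blast
  then obtain n where "dist (f (r (r' n))) L < e"
    using e unfolding lim_sequentially by blast
  with r(2) show False by blast
qed

section \<open>Operators\<close>

lemma operator_dom_l2: "is_operator T \<Longrightarrow> x \<in> opdom T \<Longrightarrow> x \<in> l2"
  by (auto simp: is_operator_def)

lemma operator_app_l2: "is_operator T \<Longrightarrow> x \<in> opdom T \<Longrightarrow> app T x \<in> l2"
  by (auto simp: is_operator_def)

lemma operator_vadd:
  "is_operator T \<Longrightarrow> x \<in> opdom T \<Longrightarrow> y \<in> opdom T \<Longrightarrow>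
    vadd x y \<in> opdom T \<and> app T (vadd x y) = vadd (app T x) (app T y)"
  by (simp add: is_operator_def)

lemma operator_smul:
  "is_operator T \<Longrightarrow> x \<in> opdom T \<Longrightarrow> smul c x \<in> opdom T \<and> app T (smul c x) = smul c (app T x)"
  by (simp add: is_operator_def)

lemma operator_vsub:
  "is_operator T \<Longrightarrow> x \<in> opdom T \<Longrightarrow> y \<in> opdom T \<Longrightarrow>
    vsub x y \<in> opdom T \<and> app T (vsub x y) = vsub (app T x) (app T y)"
  using operator_vadd[of T x "smul (-1) y"] operator_smul[of T y "-1"] by (simp add: vsub_conv_vadd)

lemma operator_vzero: "is_operator T \<Longrightarrow> vzero \<in> opdom T \<and> app T vzero = vzero"
  using operator_smul[of T vzero 0] by (simp add: is_operator_def smul_def vzero_def)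

lemma densely_defined_orthogonal_eq_vzero:
  assumes op: "is_operator T" and dense: "densely_defined T" and v: "v \<in> l2"
    and orthogonal: "\<And>w. w \<in> opdom T \<Longrightarrow> ip w v = 0"
  shows "v = vzero"
proof (rule ccontr)
  assume "v \<noteq> vzero"
  then have pos: "vnorm v > 0"
    using vnorm_eq_0_iff[OF v] vnorm_nonneg[OF v] by linarith
  then obtain w where w: "w \<in> opdom T" "vnorm (vsub v w) < vnorm v"
    using dense v unfolding densely_defined_def by blast
  have wl: "w \<in> l2" using operator_dom_l2[OF op w(1)] .
  have "ip v v = ip (vsub v w) v"
    using v wl orthogonal[OF w(1)] by (simp add: ip_vsub_left)
  moreover have "cmod (ip v v) = (vnorm v)\<^sup>2"
    unfolding ip_self[OF v] norm_of_real by simp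
  ultimately have "(vnorm v)\<^sup>2 \<le> vnorm (vsub v w) * vnorm v"
    using ip_cauchy_schwarz[of "vsub v w" v] v wl by simp
  moreover have "vnorm (vsub v w) * vnorm v < vnorm v * vnorm v"
    using w(2) pos by simp
  ultimately show False by (simp add: power2_eq_square)
qed

definition qform :: "op \<Rightarrow> vec \<Rightarrow> complex" where
  "qform T x = ip (app T x) x"

lemma symmetric_op_ip:
  "symmetric_op A \<Longrightarrow> x \<in> opdom A \<Longrightarrow> y \<in> opdom A \<Longrightarrow> ip (app A x) y = ip x (app A y)"
  by (simp add: symmetric_op_def)

lemma symmetric_op_is_operator: "symmetric_op A \<Longrightarrow> is_operator A"
  by (simp add: symmetric_op_def)

lemma qform_real:
  assumes A: "symmetric_op A" and x: "x \<in> opdom A"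
  shows "complex_of_real (Re (qform A x)) = qform A x"
proof -
  have "is_operator A"
    using A by (rule symmetric_op_is_operator)
  then have l2: "x \<in> l2" "app A x \<in> l2"
    using x by (simp_all add: operator_dom_l2 operator_app_l2)
  have "cnj (qform A x) = qform A x"
    unfolding qform_def cnj_ip[OF l2(2,1)] using symmetric_op_ip[OF A x x] by simp
  then show ?thesis
    by (metis Reals_cnj_iff Reals_def complex_is_Real_iff of_real_Re range_eqI)
qed

lemma selfadjoint_op_symmetric: "selfadjoint_op A \<Longrightarrow> symmetric_op A"
  by (simp add: selfadjoint_op_def)

lemma selfadjoint_op_is_operator: "selfadjoint_op A \<Longrightarrow> is_operator A"
  by (simp add: selfadjoint_op_def symmetric_op_def)

lemma selfadjoint_op_adj_dom:
  "selfadjoint_op A \<Longrightarrow> y \<in> l2 \<Longrightarrow> z \<in> l2 \<Longrightarrow> (\<And>x. x \<in> opdom A \<Longrightarrow> ip (app A x) y = ip x z)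
    \<Longrightarrow> y \<in> opdom A"
  unfolding selfadjoint_op_def adj_dom_def by blast

lemma selfadjoint_op_closed:
  assumes A: "selfadjoint_op A" and x: "\<And>k. x k \<in> opdom A" and "x0 \<in> l2" "y0 \<in> l2"
    and "vtendsto x x0" "vtendsto (\<lambda>k. app A (x k)) y0"
  shows "x0 \<in> opdom A" and "app A x0 = y0"
proof -
  have op: "is_operator A" and sym: "symmetric_op A"
    using A by (simp_all add: selfadjoint_op_is_operator selfadjoint_op_symmetric)
  have l2: "\<And>k. x k \<in> l2" "\<And>k. app A (x k) \<in> l2"
    using op x by (simp_all add: operator_dom_l2 operator_app_l2)
  have adjoint: "ip (app A w) x0 = ip w y0" if w: "w \<in> opdom A" for w
  proof (rule LIMSEQ_unique)
    have "w \<in> l2" "app A w \<in> l2"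
      using op w by (simp_all add: operator_dom_l2 operator_app_l2)
    then show "(\<lambda>k. ip (app A w) (x k)) \<longlonglongrightarrow> ip (app A w) x0"
      and "(\<lambda>k. ip (app A w) (x k)) \<longlonglongrightarrow> ip w y0"
      using ip_vtendsto_right[OF l2(1) _ _ \<open>vtendsto x x0\<close>, of "app A w"]
        ip_vtendsto_right[OF l2(2) _ _ \<open>vtendsto (\<lambda>k. app A (x k)) y0\<close>, of w]
        symmetric_op_ip[OF sym w x] assms by simp_all
  qed
  show dom: "x0 \<in> opdom A"
    using selfadjoint_op_adj_dom[OF A _ _ adjoint] assms by simp
  have "vsub (app A x0) y0 = vzero"
  proof (rule densely_defined_orthogonal_eq_vzero[OF op])
    show "densely_defined A" using sym by (simp add: symmetric_op_def)
    show "vsub (app A x0) y0 \<in> l2" using op dom assms by (simp add: operator_app_l2)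
    fix w assume w: "w \<in> opdom A"
    have "ip w (app A x0) = ip w y0"
      using symmetric_op_ip[OF sym w dom] adjoint[OF w] by simp
    then show "ip w (vsub (app A x0) y0) = 0"
      using op w dom assms by (simp add: ip_vsub_right operator_dom_l2 operator_app_l2)
  qed
  then show "app A x0 = y0"
    by (simp add: vsub_def vzero_def fun_eq_iff)
qed

definition op_affine :: "real \<Rightarrow> real \<Rightarrow> op \<Rightarrow> op" where
  "op_affine s c A = (opdom A, \<lambda>x. vadd (smul (complex_of_real s) (app A x)) (smul (complex_of_real c) x))"

lemma opdom_op_affine [simp]: "opdom (op_affine s c A) = opdom A"
  by (simp add: op_affine_def opdom_def)

lemma app_op_affine [simp]:
  "app (op_affine s c A) x = vadd (smul (complex_of_real s) (app A x)) (smul (complex_of_real c) x)"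
  by (simp add: op_affine_def app_def)

lemma is_operator_op_affine:
  assumes A: "is_operator A"
  shows "is_operator (op_affine s c A)"
  unfolding is_operator_def
proof (intro conjI ballI allI)
  show "opdom (op_affine s c A) \<subseteq> l2" "vzero \<in> opdom (op_affine s c A)"
    using A by (auto simp: is_operator_def)
  show "app (op_affine s c A) ` opdom (op_affine s c A) \<subseteq> l2"
    using A by (auto simp: operator_dom_l2 operator_app_l2)
  fix x y d assume x: "x \<in> opdom (op_affine s c A)"
  then show "smul d x \<in> opdom (op_affine s c A)"
    and "app (op_affine s c A) (smul d x) = smul d (app (op_affine s c A) x)"
    using operator_smul[OF A, of x d] by (simp_all add: vadd_def smul_def fun_eq_iff algebra_simps)
  assume y: "y \<in> opdom (op_affine s c A)"
  with x show "vadd x y \<in> opdom (op_affine s c A)"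
    and "app (op_affine s c A) (vadd x y) = vadd (app (op_affine s c A) x) (app (op_affine s c A) y)"
    using operator_vadd[OF A, of x y] by (simp_all add: vadd_def smul_def fun_eq_iff algebra_simps)
qed

lemma ip_app_op_affine_left:
  assumes "is_operator A" "x \<in> opdom A" "y \<in> l2"
  shows "ip (app (op_affine s c A) x) y = complex_of_real s * ip (app A x) y + complex_of_real c * ip x y"
  using assms by (simp add: ip_vadd_left ip_smul_left operator_dom_l2 operator_app_l2)

lemma symmetric_op_affine:
  assumes A: "symmetric_op A"
  shows "symmetric_op (op_affine s c A)"
proof -
  have op: "is_operator A"
    using A by (rule symmetric_op_is_operator)
  have "ip (app (op_affine s c A) x) y = ip x (app (op_affine s c A) y)"
    if x: "x \<in> opdom A" and y: "y \<in> opdom A" for x y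
  proof -
    have l2: "x \<in> l2" "y \<in> l2" "app A x \<in> l2" "app A y \<in> l2"
      using op x y by (simp_all add: operator_dom_l2 operator_app_l2)
    have "ip (app (op_affine s c A) x) y =
        complex_of_real s * ip x (app A y) + complex_of_real c * ip x y"
      using ip_app_op_affine_left[OF op x l2(2)] symmetric_op_ip[OF A x y] by simp
    also have "\<dots> = ip x (app (op_affine s c A) y)"
      using l2 by (simp add: ip_vadd_right ip_smul_right)
    finally show ?thesis .
  qed
  then show ?thesis
    using is_operator_op_affine[OF op] A by (simp add: symmetric_op_def densely_defined_def)
qed

lemma selfadjoint_op_affine:
  assumes A: "selfadjoint_op A" and s: "s \<noteq> 0"
  shows "selfadjoint_op (op_affine s c A)"
proof -
  have op: "is_operator A"
    using A by (rule selfadjoint_op_is_operator)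
  have "y \<in> opdom A" if "y \<in> adj_dom (op_affine s c A)" for y
  proof -
    from that obtain z where y: "y \<in> l2" and z: "z \<in> l2"
      and adjoint: "\<And>x. x \<in> opdom A \<Longrightarrow> ip (app (op_affine s c A) x) y = ip x z"
      unfolding adj_dom_def by auto
    let ?z' = "smul (complex_of_real (1 / s)) (vsub z (smul (complex_of_real c) y))"
    show ?thesis
    proof (rule selfadjoint_op_adj_dom[OF A y])
      show "?z' \<in> l2" using y z by simp
      fix x assume x: "x \<in> opdom A"
      have "complex_of_real s * ip (app A x) y + complex_of_real c * ip x y = ip x z"
        using adjoint[OF x] ip_app_op_affine_left[OF op x y, of s c] by simp
      then have "complex_of_real s * ip (app A x) y = ip x z - complex_of_real c * ip x y"
        by (simp add: eq_diff_eq)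
      then show "ip (app A x) y = ip x ?z'"
        using op x y z s
        by (simp add: ip_smul_right ip_vsub_right operator_dom_l2 field_simps)
    qed
  qed
  then show ?thesis
    using symmetric_op_affine[OF selfadjoint_op_symmetric[OF A]]
    by (auto simp: selfadjoint_op_def)
qed

lemma Re_qform_op_affine:
  assumes "is_operator A" "x \<in> opdom A"
  shows "Re (qform (op_affine s c A) x) = s * Re (qform A x) + c * (vnorm x)\<^sup>2"
  using ip_app_op_affine_left[OF assms, of x s c] assms
  by (simp add: qform_def operator_dom_l2)

definition op_ge_id :: "op \<Rightarrow> bool" where
  "op_ge_id A \<longleftrightarrow> selfadjoint_op A \<and> (\<forall>x\<in>opdom A. (vnorm x)\<^sup>2 \<le> Re (qform A x))"

lemma op_ge_id_selfadjoint: "op_ge_id A \<Longrightarrow> selfadjoint_op A"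
  by (simp add: op_ge_id_def)

lemma op_ge_id_symmetric: "op_ge_id A \<Longrightarrow> symmetric_op A"
  by (simp add: op_ge_id_def selfadjoint_op_symmetric)

lemma op_ge_id_is_operator: "op_ge_id A \<Longrightarrow> is_operator A"
  by (simp add: op_ge_id_def selfadjoint_op_is_operator)

lemma op_ge_id_qform: "op_ge_id A \<Longrightarrow> x \<in> opdom A \<Longrightarrow> (vnorm x)\<^sup>2 \<le> Re (qform A x)"
  by (simp add: op_ge_id_def)

lemma op_ge_id_qform_nonneg: "op_ge_id A \<Longrightarrow> x \<in> opdom A \<Longrightarrow> 0 \<le> Re (qform A x)"
  using op_ge_id_qform[of A x] zero_le_power2[of "vnorm x"] by linarith

lemma op_ge_id_affineI:
  assumes A: "selfadjoint_op A" and "s \<noteq> 0"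
    and "\<And>x. x \<in> opdom A \<Longrightarrow> (vnorm x)\<^sup>2 \<le> s * Re (qform A x) + c * (vnorm x)\<^sup>2"
  shows "op_ge_id (op_affine s c A)"
  using assms selfadjoint_op_affine Re_qform_op_affine[OF selfadjoint_op_is_operator[OF A]]
  by (simp add: op_ge_id_def)

lemma op_ge_id_affine:
  assumes A: "op_ge_id A" and "s > 0" "c \<ge> 0" "s + c \<ge> 1"
  shows "op_ge_id (op_affine s c A)"
proof (rule op_ge_id_affineI)
  show "selfadjoint_op A" "s \<noteq> 0"
    using assms by (simp_all add: op_ge_id_selfadjoint)
  fix x assume "x \<in> opdom A"
  then have "s * (vnorm x)\<^sup>2 \<le> s * Re (qform A x)"
    using op_ge_id_qform[OF A] \<open>s > 0\<close> by simp
  moreover have "(vnorm x)\<^sup>2 \<le> (s + c) * (vnorm x)\<^sup>2"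
    using \<open>s + c \<ge> 1\<close> by (simp add: mult_le_cancel_right1)
  ultimately show "(vnorm x)\<^sup>2 \<le> s * Re (qform A x) + c * (vnorm x)\<^sup>2"
    by (simp add: algebra_simps)
qed

lemma op_ge_id_vnorm_le:
  assumes A: "op_ge_id A" and x: "x \<in> opdom A"
  shows "vnorm x \<le> vnorm (app A x)"
proof -
  have l2: "x \<in> l2" "app A x \<in> l2"
    using op_ge_id_is_operator[OF A] x by (simp_all add: operator_dom_l2 operator_app_l2)
  have "(vnorm x)\<^sup>2 \<le> cmod (qform A x)"
    using op_ge_id_qform[OF A x] complex_Re_le_cmod order_trans by blast
  also have "\<dots> \<le> vnorm (app A x) * vnorm x"
    unfolding qform_def by (rule ip_cauchy_schwarz[OF l2(2,1)])
  finally have "vnorm x * vnorm x \<le> vnorm (app A x) * vnorm x"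
    by (simp add: power2_eq_square)
  moreover have "0 \<le> vnorm x"
    using l2 by simp
  ultimately show ?thesis
    using l2 by (cases "vnorm x = 0") (simp_all add: mult_le_cancel_right)
qed

section \<open>The projection theorem and inverses\<close>

lemma vnorm_vsub_triangle3:
  assumes "x \<in> l2" "y \<in> l2" "z \<in> l2"
  shows "vnorm (vsub x z) \<le> vnorm (vsub x y) + vnorm (vsub y z)"
proof -
  have "vsub x z = vadd (vsub x y) (vsub y z)"
    by (simp add: vsub_def vadd_def fun_eq_iff)
  then show ?thesis
    using vnorm_triangle[of "vsub x y" "vsub y z"] assms by simp
qed

lemma vCauchy_if_vtendsto:
  assumes x: "\<And>n. x n \<in> l2" and L: "L \<in> l2" and lim: "vtendsto x L"
  shows "vCauchy x"
  unfolding vCauchy_def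
proof (intro allI impI)
  fix e :: real assume "e > 0"
  then have "e / 2 > 0" by simp
  then obtain N where "\<forall>n\<ge>N. norm (vnorm (vsub (x n) L) - 0) < e / 2"
    using lim unfolding vtendsto_def LIMSEQ_iff by blast
  then have N: "vnorm (vsub (x n) L) < e / 2" if "n \<ge> N" for n
    using that x L by simp
  have "vnorm (vsub (x j) (x k)) < e" if "j \<ge> N" "k \<ge> N" for j k
    using vnorm_vsub_triangle3[OF x L x, of j k] N[OF that(1)] N[OF that(2)]
      vnorm_vsub_commute[of L "x k"] by simp
  then show "\<exists>N. \<forall>j\<ge>N. \<forall>k\<ge>N. vnorm (vsub (x j) (x k)) < e"
    by blast
qed

lemma apollonius:
  assumes y: "y \<in> l2" and "u \<in> l2" "v \<in> l2"
  shows "(vnorm (vsub u v))\<^sup>2 = 2 * (vnorm (vsub y u))\<^sup>2 + 2 * (vnorm (vsub y v))\<^sup>2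
    - 4 * (vnorm (vsub y (smul (1/2) (vadd u v))))\<^sup>2"
proof -
  have "vadd (vsub y u) (vsub y v) = smul 2 (vsub y (smul (1/2) (vadd u v)))"
    by (simp add: vadd_def vsub_def smul_def fun_eq_iff algebra_simps)
  then have "(vnorm (vadd (vsub y u) (vsub y v)))\<^sup>2 = 4 * (vnorm (vsub y (smul (1/2) (vadd u v))))\<^sup>2"
    using assms by (simp add: vnorm_smul power_mult_distrib)
  moreover have "vsub (vsub y u) (vsub y v) = vsub v u"
    by (simp add: vsub_def fun_eq_iff)
  ultimately show ?thesis
    using parallelogram_law[of "vsub y u" "vsub y v"] assms by (simp add: vnorm_vsub_commute[of v])
qed

lemma minimizing_sequence_vCauchy:
  assumes midpoint: "\<And>u v. u \<in> M \<Longrightarrow> v \<in> M \<Longrightarrow> smul (1/2) (vadd u v) \<in> M"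
    and M: "M \<subseteq> l2" and y: "y \<in> l2" and dist: "\<And>w. w \<in> M \<Longrightarrow> d \<le> vnorm (vsub y w)"
    and m: "\<And>n. m n \<in> M" and lim: "(\<lambda>n. vnorm (vsub y (m n))) \<longlonglongrightarrow> d"
  shows "vCauchy m"
  unfolding vCauchy_def
proof (intro allI impI)
  fix e :: real assume "e > 0"
  have l2: "\<And>n. m n \<in> l2"
    using m M by auto
  have d: "0 \<le> d"
    using lim by (rule LIMSEQ_le_const) (use y l2 in simp)
  have "(\<lambda>n. (vnorm (vsub y (m n)))\<^sup>2) \<longlonglongrightarrow> d\<^sup>2"
    by (intro tendsto_intros lim)
  moreover have "e\<^sup>2 / 4 > 0"
    using \<open>e > 0\<close> by simp
  ultimately obtain N where N0: "\<forall>n\<ge>N. norm ((vnorm (vsub y (m n)))\<^sup>2 - d\<^sup>2) < e\<^sup>2 / 4"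
    unfolding LIMSEQ_iff by blast
  have N: "(vnorm (vsub y (m n)))\<^sup>2 < d\<^sup>2 + e\<^sup>2 / 4" if "n \<ge> N" for n
    using N0 that by (auto simp only: real_norm_def abs_less_iff)
  have "vnorm (vsub (m j) (m k)) < e" if "j \<ge> N" "k \<ge> N" for j k
  proof -
    have "d \<le> vnorm (vsub y (smul (1/2) (vadd (m j) (m k))))"
      using dist[OF midpoint[OF m m]] .
    then have "d\<^sup>2 \<le> (vnorm (vsub y (smul (1/2) (vadd (m j) (m k)))))\<^sup>2"
      using d by (intro power_mono) simp_all
    then have "(vnorm (vsub (m j) (m k)))\<^sup>2 < e\<^sup>2"
      using apollonius[OF y l2 l2, of j k] N[OF that(1)] N[OF that(2)] by linarith
    then show ?thesis
      using \<open>e > 0\<close> by (simp add: power_less_imp_less_base less_imp_le)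
  qed
  then show "\<exists>N. \<forall>j\<ge>N. \<forall>k\<ge>N. vnorm (vsub (m j) (m k)) < e"
    by blast
qed

definition vclosed :: "vec set \<Rightarrow> bool" where
  "vclosed M \<longleftrightarrow> (\<forall>x L. (\<forall>n. x n \<in> M) \<and> L \<in> l2 \<and> vtendsto x L \<longrightarrow> L \<in> M)"

lemma l2_dist_attained:
  assumes M: "M \<subseteq> l2" "M \<noteq> {}"
    and midpoint: "\<And>u v. u \<in> M \<Longrightarrow> v \<in> M \<Longrightarrow> smul (1/2) (vadd u v) \<in> M"
    and closed: "vclosed M"
    and y: "y \<in> l2"
  shows "\<exists>m\<in>M. \<forall>w\<in>M. vnorm (vsub y m) \<le> vnorm (vsub y w)"
proof -
  define d where "d = Inf ((\<lambda>w. vnorm (vsub y w)) ` M)"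
  have bdd: "bdd_below ((\<lambda>w. vnorm (vsub y w)) ` M)"
    using M y by (intro bdd_belowI2[of _ 0]) auto
  have dist: "d \<le> vnorm (vsub y w)" if "w \<in> M" for w
    unfolding d_def using bdd that by (rule cINF_lower)
  have "\<forall>n. \<exists>w. w \<in> M \<and> vnorm (vsub y w) < d + inverse (real (Suc n))"
    using cInf_lessD[of "(\<lambda>w. vnorm (vsub y w)) ` M" "d + inverse (real (Suc _))"] M
    by (auto simp: d_def)
  then obtain m where m: "\<And>n. m n \<in> M"
    and upper: "\<And>n. vnorm (vsub y (m n)) < d + inverse (real (Suc n))"
    by (auto dest!: choice)
  have lim: "(\<lambda>n. vnorm (vsub y (m n))) \<longlonglongrightarrow> d"
  proof (rule real_tendsto_sandwich)
    show "\<forall>\<^sub>F n in sequentially. d \<le> vnorm (vsub y (m n))"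
      using dist[OF m] by simp
    show "\<forall>\<^sub>F n in sequentially. vnorm (vsub y (m n)) \<le> d + inverse (real (Suc n))"
      using upper by (simp add: less_imp_le)
    show "(\<lambda>n. d + inverse (real (Suc n))) \<longlonglongrightarrow> d"
      using tendsto_add[OF tendsto_const LIMSEQ_inverse_real_of_nat, of d] by simp
  qed simp
  have l2: "\<And>n. m n \<in> l2"
    using m M by auto
  obtain L where L: "L \<in> l2" "vtendsto m L"
    using l2_complete[OF l2 minimizing_sequence_vCauchy[OF midpoint M(1) y dist m lim]] by blast
  have "vsub (vsub y (m n)) (vsub y L) = vsub L (m n)" for n
    by (simp add: vsub_def fun_eq_iff)
  then have "vtendsto (\<lambda>n. vsub y (m n)) (vsub y L)"
    using L(2) by (simp add: vtendsto_def vnorm_vsub_commute[of L])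
  then have "(\<lambda>n. vnorm (vsub y (m n))) \<longlonglongrightarrow> vnorm (vsub y L)"
    using y l2 L by (intro vnorm_vtendsto) simp_all
  then have "vnorm (vsub y L) = d"
    using lim by (rule LIMSEQ_unique)
  then show ?thesis
    using closed m L dist unfolding vclosed_def by blast
qed

lemma ip_eq_0_if_minimizer:
  assumes M: "M \<subseteq> l2" and "m \<in> M" and y: "y \<in> l2"
    and line: "\<And>w s. w \<in> M \<Longrightarrow> vadd m (smul s w) \<in> M"
    and minimal: "\<And>w. w \<in> M \<Longrightarrow> vnorm (vsub y m) \<le> vnorm (vsub y w)"
    and w: "w \<in> M"
  shows "ip w (vsub y m) = 0"
proof -
  define e where "e = vsub y m"
  have l2: "e \<in> l2" "w \<in> l2"
    using assms by (auto simp: e_def)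
  have "(cmod (ip e w))\<^sup>2 \<le> 0 * (vnorm w)\<^sup>2"
  proof (rule cmod_power2_le_of_quadratic_nonneg)
    fix s
    have "vsub y (vadd m (smul s w)) = vsub e (smul s w)"
      by (simp add: e_def vsub_def vadd_def smul_def fun_eq_iff)
    then have "vnorm e \<le> vnorm (vsub e (smul s w))"
      using minimal[OF line[OF w, of s]] by (simp add: e_def)
    then have "(vnorm e)\<^sup>2 \<le> (vnorm (vsub e (smul s w)))\<^sup>2"
      using l2 by (intro power_mono) simp_all
    moreover have "(vnorm (vsub e (smul s w)))\<^sup>2 =
        (vnorm e)\<^sup>2 - 2 * Re (cnj s * ip e w) + (cmod s)\<^sup>2 * (vnorm w)\<^sup>2"
      using Re_ip_vsub_smul_self[OF l2, of s] Re_ip_self[of "vsub e (smul s w)"] l2 by simp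
    ultimately show "0 \<le> 0 - 2 * Re (cnj s * ip e w) + (cmod s)\<^sup>2 * (vnorm w)\<^sup>2"
      by linarith
  qed simp
  then have "ip e w = 0" by simp
  then show ?thesis
    using cnj_ip[OF l2] by (simp add: e_def)
qed

theorem l2_projection:
  assumes M: "M \<subseteq> l2" "vzero \<in> M"
    and vadd: "\<And>u v. u \<in> M \<Longrightarrow> v \<in> M \<Longrightarrow> vadd u v \<in> M"
    and smul: "\<And>c u. u \<in> M \<Longrightarrow> smul c u \<in> M"
    and closed: "vclosed M"
    and y: "y \<in> l2"
  shows "\<exists>m\<in>M. \<forall>w\<in>M. ip w (vsub y m) = 0"
proof -
  have nonempty: "M \<noteq> {}"
    using M(2) by blast
  have midpoint: "smul (1/2) (vadd u v) \<in> M" if "u \<in> M" "v \<in> M" for u v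
    by (intro smul vadd that)
  obtain m where m: "m \<in> M"
    and minimal: "\<And>w. w \<in> M \<Longrightarrow> vnorm (vsub y m) \<le> vnorm (vsub y w)"
    using l2_dist_attained[OF M(1) nonempty midpoint closed y] by auto
  have line: "vadd m (smul s w) \<in> M" if "w \<in> M" for w s
    by (intro vadd smul that m)
  show ?thesis
    using ip_eq_0_if_minimizer[OF M(1) m y line minimal] m by blast
qed

lemma vCauchy_if_vnorm_vsub_le:
  assumes le: "\<And>j k. vnorm (vsub (u j) (u k)) \<le> vnorm (vsub (x j) (x k))" and "vCauchy x"
  shows "vCauchy u"
  unfolding vCauchy_def
proof (intro allI impI)
  fix e :: real assume "e > 0"
  then obtain N where N: "\<forall>j\<ge>N. \<forall>k\<ge>N. vnorm (vsub (x j) (x k)) < e"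
    using \<open>vCauchy x\<close> unfolding vCauchy_def by blast
  have "vnorm (vsub (u j) (u k)) < e" if "j \<ge> N" "k \<ge> N" for j k
    using order_le_less_trans[OF le[of j k]] N that by blast
  then show "\<exists>N. \<forall>j\<ge>N. \<forall>k\<ge>N. vnorm (vsub (u j) (u k)) < e"
    by blast
qed

lemma vadd_in_operator_range:
  assumes op: "is_operator A" and "u \<in> app A ` opdom A" "v \<in> app A ` opdom A"
  shows "vadd u v \<in> app A ` opdom A"
proof -
  from assms(2,3) obtain a b where "a \<in> opdom A" "b \<in> opdom A" "u = app A a" "v = app A b"
    by blast
  then show ?thesis
    using operator_vadd[OF op, of a b] by (metis image_eqI)
qed

lemma smul_in_operator_range:
  assumes op: "is_operator A" and "u \<in> app A ` opdom A"
  shows "smul c u \<in> app A ` opdom A"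
proof -
  from assms(2) obtain a where "a \<in> opdom A" "u = app A a"
    by blast
  then show ?thesis
    using operator_smul[OF op, of a c] by (metis image_eqI)
qed

lemma op_ge_id_range_closed:
  assumes A: "op_ge_id A"
  shows "vclosed (app A ` opdom A)"
  unfolding vclosed_def
proof (intro allI impI, elim conjE)
  fix x L assume x: "\<forall>n. x n \<in> app A ` opdom A" and "L \<in> l2" "vtendsto x L"
  have op: "is_operator A"
    using A by (rule op_ge_id_is_operator)
  have "\<exists>v. v \<in> opdom A \<and> app A v = x n" for n
    using spec[OF x, of n] by (auto elim!: imageE)
  then have "\<forall>n. \<exists>v. v \<in> opdom A \<and> app A v = x n"
    by (rule allI)
  then obtain u where "\<forall>n. u n \<in> opdom A \<and> app A (u n) = x n"
    by (auto dest!: choice)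
  then have u: "\<And>n. u n \<in> opdom A" "\<And>n. app A (u n) = x n"
    by simp_all
  have l2: "\<And>n. u n \<in> l2" "\<And>n. x n \<in> l2"
    using operator_dom_l2[OF op u(1)] operator_app_l2[OF op u(1)] by (simp_all add: u(2))
  have le: "vnorm (vsub (u j) (u k)) \<le> vnorm (vsub (x j) (x k))" for j k
    using op_ge_id_vnorm_le[OF A, of "vsub (u j) (u k)"] operator_vsub[OF op u(1) u(1), of j k]
    by (simp add: u(2))
  have "vCauchy x"
    using vCauchy_if_vtendsto[OF l2(2)] \<open>L \<in> l2\<close> \<open>vtendsto x L\<close> by simp
  then have "vCauchy u"
    by (rule vCauchy_if_vnorm_vsub_le[OF le])
  then obtain u0 where "u0 \<in> l2" "vtendsto u u0"
    using l2_complete[of u, OF l2(1)] by blast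
  then have "u0 \<in> opdom A" "app A u0 = L"
    using selfadjoint_op_closed[OF op_ge_id_selfadjoint[OF A] u(1)] \<open>L \<in> l2\<close> \<open>vtendsto x L\<close> u(2)
    by simp_all
  then show "L \<in> app A ` opdom A" by blast
qed

theorem op_ge_id_surj:
  assumes A: "op_ge_id A" and y: "y \<in> l2"
  shows "\<exists>x\<in>opdom A. app A x = y"
proof -
  have op: "is_operator A"
    using A by (rule op_ge_id_is_operator)
  have range: "app A ` opdom A \<subseteq> l2" "vzero \<in> app A ` opdom A"
    using op operator_vzero[OF op] by (auto simp: operator_app_l2 intro!: image_eqI[of vzero])
  obtain m where "m \<in> app A ` opdom A" and orthogonal: "\<forall>w\<in>app A ` opdom A. ip w (vsub y m) = 0"
    using l2_projection[OF range vadd_in_operator_range[OF op] smul_in_operator_range[OF op]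
        op_ge_id_range_closed[OF A] y]
    by blast
  then obtain x0 where x0: "x0 \<in> opdom A" "app A x0 = m"
    by blast
  define e where "e = vsub y m"
  have e: "e \<in> l2"
    using y operator_app_l2[OF op x0(1)] by (simp add: e_def x0(2))
  have "e \<in> opdom A"
    using selfadjoint_op_adj_dom[OF op_ge_id_selfadjoint[OF A] e l2_vzero] orthogonal
    by (simp add: e_def)
  then have "(vnorm e)\<^sup>2 \<le> Re (qform A e)"
    by (rule op_ge_id_qform[OF A])
  moreover have "qform A e = 0"
    using orthogonal \<open>e \<in> opdom A\<close> by (simp add: qform_def e_def)
  ultimately have "(vnorm e)\<^sup>2 \<le> 0"
    by simp
  then have "e = vzero"
    using vnorm_eq_0_iff[OF e] by simp
  then show ?thesis
    using x0 by (auto simp: e_def vsub_def vzero_def fun_eq_iff)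
qed

definition op_inv :: "op \<Rightarrow> vec \<Rightarrow> vec" where
  "op_inv A y = (SOME x. x \<in> opdom A \<and> app A x = y)"

lemma
  assumes "op_ge_id A" "y \<in> l2"
  shows op_inv_in_opdom: "op_inv A y \<in> opdom A" and app_op_inv: "app A (op_inv A y) = y"
  using someI_ex[OF op_ge_id_surj[OF assms, unfolded Bex_def]] by (simp_all add: op_inv_def)

section \<open>Relatively compact perturbations\<close>

lemma rel_compact_dom: "rel_compact U A \<Longrightarrow> x \<in> opdom A \<Longrightarrow> x \<in> opdom U"
  by (auto simp: rel_compact_def)

lemma rel_compactD:
  "rel_compact U A \<Longrightarrow> (\<And>n. x n \<in> opdom A) \<Longrightarrow> bounded_seq x \<Longrightarrow>
    bounded_seq (\<lambda>n. app A (x n)) \<Longrightarrow> has_conv_subseq (\<lambda>n. app U (x n))"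
  by (simp add: rel_compact_def)

lemma weak_to_zero_subseq: "weak_to_zero w \<Longrightarrow> strict_mono r \<Longrightarrow> weak_to_zero (\<lambda>n. w (r n))"
  unfolding weak_to_zero_def using LIMSEQ_subseq_LIMSEQ by (fastforce simp: o_def)

lemma weak_to_zero_vtendsto_app_eq_vzero:
  assumes U: "symmetric_op U" and w: "\<And>n. w n \<in> opdom U" and weak: "weak_to_zero w"
    and L: "L \<in> l2" and lim: "vtendsto (\<lambda>n. app U (w n)) L"
  shows "L = vzero"
proof (rule densely_defined_orthogonal_eq_vzero[OF symmetric_op_is_operator[OF U] _ L])
  show "densely_defined U"
    using U by (simp add: symmetric_op_def)
  fix v assume v: "v \<in> opdom U"
  have l2: "v \<in> l2" "app U v \<in> l2" "\<And>n. app U (w n) \<in> l2"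
    using symmetric_op_is_operator[OF U] v w by (simp_all add: operator_dom_l2 operator_app_l2)
  have "(\<lambda>n. ip (w n) (app U v)) \<longlonglongrightarrow> 0"
    using weak l2 by (simp add: weak_to_zero_def)
  then have "(\<lambda>n. ip (app U (w n)) v) \<longlonglongrightarrow> 0"
    using symmetric_op_ip[OF U w v] by simp
  moreover have "(\<lambda>n. ip (app U (w n)) v) \<longlonglongrightarrow> ip L v"
    using ip_vtendsto_left[OF l2(3) L l2(1) lim] .
  ultimately have "ip L v = 0"
    using LIMSEQ_unique by blast
  then show "ip v L = 0"
    using cnj_ip[OF L l2(1)] by simp
qed

lemma rel_compact_vnorm_tendsto_zero:
  assumes U: "symmetric_op U" and rc: "rel_compact U A"
    and w: "\<And>n. w n \<in> opdom A" and "bounded_seq w" "bounded_seq (\<lambda>n. app A (w n))"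
    and weak: "weak_to_zero w"
  shows "(\<lambda>n. vnorm (app U (w n))) \<longlonglongrightarrow> 0"
proof (rule LIMSEQ_if_subseqs_LIMSEQ)
  fix r :: "nat \<Rightarrow> nat" assume r: "strict_mono r"
  have "has_conv_subseq (\<lambda>n. app U (w (r n)))"
    using assms(4,5) by (intro rel_compactD[OF rc] w) (auto simp: bounded_seq_def)
  then obtain r' L where r': "strict_mono r'" and L: "L \<in> l2"
    and lim: "vtendsto (\<lambda>n. app U (w (r (r' n)))) L"
    unfolding has_conv_subseq_def vtendsto_def by blast
  have "L = vzero"
    using weak_to_zero_vtendsto_app_eq_vzero[OF U rel_compact_dom[OF rc w] _ L lim]
      weak_to_zero_subseq[OF weak strict_mono_o[OF r r']] by (simp add: o_def)
  with r' lim show "\<exists>r'. strict_mono r' \<and> (\<lambda>n. vnorm (app U (w (r (r' n))))) \<longlonglongrightarrow> 0"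
    by (auto simp: vtendsto_def)
qed

lemma rel_compact_vnorm_tendsto_zero_if_vnorm_tendsto_zero:
  assumes U: "symmetric_op U" and rc: "rel_compact U A"
    and y: "\<And>n. y n \<in> opdom A" "bounded_seq (\<lambda>n. app A (y n))"
    and l2: "\<And>n. y n \<in> l2" and lim: "(\<lambda>n. vnorm (y n)) \<longlonglongrightarrow> 0"
  shows "(\<lambda>n. vnorm (app U (y n))) \<longlonglongrightarrow> 0"
proof (rule rel_compact_vnorm_tendsto_zero[OF U rc y(1) _ y(2)])
  obtain K where K: "\<And>n. norm (vnorm (y n)) \<le> K"
    using convergent_imp_Bseq[OF convergentI[OF lim]] by (auto simp: Bseq_def)
  have "vnorm (y n) \<le> K" for n
    using abs_le_D1[of "vnorm (y n)" K] K[of n] by simp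
  then show "bounded_seq y"
    unfolding bounded_seq_def by blast
  show "weak_to_zero y"
    using lim l2 by (intro weak_to_zero_if_vtendsto_vzero) (simp_all add: vtendsto_def)
qed

lemma rel_compact_relative_bound:
  assumes A: "is_operator A" and U: "symmetric_op U" and rc: "rel_compact U A" and e: "e > 0"
  shows "\<exists>D. \<forall>x\<in>opdom A. vnorm (app U x) \<le> e * vnorm (app A x) + D * vnorm x"
proof (rule ccontr)
  assume "\<not> ?thesis"
  then have "\<forall>n::nat. \<exists>x. x \<in> opdom A \<and> e * vnorm (app A x) + real (Suc n) * vnorm x < vnorm (app U x)"
    by (auto simp: not_le)
  then obtain x where x: "\<And>n. x n \<in> opdom A"
    and big: "\<And>n. e * vnorm (app A (x n)) + real (Suc n) * vnorm (x n) < vnorm (app U (x n))"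
    by (auto dest!: choice)
  have opU: "is_operator U"
    using U by (rule symmetric_op_is_operator)
  have xU: "\<And>n. x n \<in> opdom U"
    using rel_compact_dom[OF rc x] .
  have l2: "\<And>n. x n \<in> l2" "\<And>n. app A (x n) \<in> l2" "\<And>n. app U (x n) \<in> l2"
    using A opU x xU by (simp_all add: operator_dom_l2 operator_app_l2)
  define c where "c n = vnorm (app U (x n))" for n
  have nonneg: "0 \<le> e * vnorm (app A (x n))" "0 \<le> real (Suc n) * vnorm (x n)" for n
    using e l2 by simp_all
  have c: "c n > 0" for n
    using big[of n] nonneg[of n] unfolding c_def by linarith
  define y where "y n = smul (complex_of_real (1 / c n)) (x n)" for n
  have y: "y n \<in> opdom A" "app A (y n) = smul (complex_of_real (1 / c n)) (app A (x n))"
    "app U (y n) = smul (complex_of_real (1 / c n)) (app U (x n))" for n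
    using operator_smul[OF A x] operator_smul[OF opU xU] by (simp_all add: y_def)
  have "vnorm (app A (y n)) \<le> 1 / e" for n
  proof -
    have "vnorm (app A (x n)) / c n \<le> 1 / e"
      using big[of n] nonneg[of n] c[of n] e unfolding c_def by (simp add: field_simps)
    then show ?thesis
      using c[of n] l2 by (simp add: y vnorm_smul norm_divide)
  qed
  then have "bounded_seq (\<lambda>n. app A (y n))"
    unfolding bounded_seq_def by blast
  moreover have "(\<lambda>n. vnorm (y n)) \<longlonglongrightarrow> 0"
  proof (rule real_tendsto_sandwich[OF _ _ tendsto_const LIMSEQ_inverse_real_of_nat])
    have "vnorm (x n) / c n \<le> inverse (real (Suc n))" for n
      using big[of n] nonneg[of n] c[of n] unfolding c_def by (simp add: field_simps)
    then show "\<forall>\<^sub>F n in sequentially. vnorm (y n) \<le> inverse (real (Suc n))"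
      using l2 by (simp add: y_def vnorm_smul norm_divide abs_of_pos[OF c])
  qed (use l2 in \<open>simp add: y_def\<close>)
  ultimately have "(\<lambda>n. vnorm (app U (y n))) \<longlonglongrightarrow> 0"
    using l2 by (intro rel_compact_vnorm_tendsto_zero_if_vnorm_tendsto_zero[OF U rc y(1)])
      (simp_all add: y_def)
  moreover have "vnorm (app U (y n)) = 1" for n
    using c[of n] l2 by (simp add: y vnorm_smul c_def norm_divide)
  ultimately show False
    using LIMSEQ_unique[OF _ tendsto_const[of "1::real"]] by force
qed

section \<open>Form bounds\<close>

lemma energy_cauchy_schwarz:
  assumes A: "op_ge_id A" and a: "a \<in> opdom A" and b: "b \<in> opdom A"
  shows "(cmod (ip a (app A b)))\<^sup>2 \<le> Re (qform A a) * Re (qform A b)"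
proof (rule cmod_power2_le_of_quadratic_nonneg)
  have op: "is_operator A" and sym: "symmetric_op A"
    using A by (simp_all add: op_ge_id_is_operator op_ge_id_symmetric)
  show "0 \<le> Re (qform A b)"
    using op_ge_id_qform_nonneg[OF A b] .
  fix s
  have l2: "a \<in> l2" "b \<in> l2" "app A a \<in> l2" "app A b \<in> l2"
    using op a b by (simp_all add: operator_dom_l2 operator_app_l2)
  have d: "vsub a (smul s b) \<in> opdom A"
    and Ad: "app A (vsub a (smul s b)) = vsub (app A a) (smul s (app A b))"
    using operator_vsub[OF op a, of "smul s b"] operator_smul[OF op b, of s] by simp_all
  have "qform A (vsub a (smul s b)) = qform A a - cnj s * ip (app A a) b - s * ip (app A b) a
      + s * cnj s * qform A b"
    unfolding qform_def Ad by (rule ip_vsub_smul_vsub_smul[OF l2(3,4,1,2)])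
  also have "ip (app A a) b = ip a (app A b)"
    using symmetric_op_ip[OF sym a b] .
  also have "ip (app A b) a = cnj (ip a (app A b))"
    using cnj_ip[OF l2(1,4)] symmetric_op_ip[OF sym b a] by simp
  also have "s * cnj s * qform A b = complex_of_real ((cmod s)\<^sup>2 * Re (qform A b))"
    using qform_real[OF sym b] by (metis complex_norm_square of_real_mult)
  finally have "Re (qform A (vsub a (smul s b))) =
      Re (qform A a) - 2 * Re (cnj s * ip a (app A b)) + (cmod s)\<^sup>2 * Re (qform A b)"
    by simp
  then show "0 \<le> Re (qform A a) - 2 * Re (cnj s * ip a (app A b)) + (cmod s)\<^sup>2 * Re (qform A b)"
    using op_ge_id_qform_nonneg[OF A d] by simp
qed

lemma funpow_closed: "(\<And>y. y \<in> D \<Longrightarrow> f y \<in> D) \<Longrightarrow> y \<in> D \<Longrightarrow> (f ^^ m) y \<in> D"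
  by (induction m) simp_all

lemma funpow_symmetric:
  assumes closed: "\<And>y. y \<in> D \<Longrightarrow> f y \<in> D"
    and symmetric: "\<And>a b. a \<in> D \<Longrightarrow> b \<in> D \<Longrightarrow> g (f a) b = g a (f b)"
    and "a \<in> D" "b \<in> D"
  shows "g ((f ^^ m) a) b = g a ((f ^^ m) b)"
  using \<open>b \<in> D\<close>
proof (induction m arbitrary: b)
  case (Suc m)
  have "g ((f ^^ Suc m) a) b = g ((f ^^ m) a) (f b)"
    using symmetric[OF funpow_closed[OF closed \<open>a \<in> D\<close>] Suc.prems] by simp
  also have "\<dots> = g a ((f ^^ m) (f b))"
    using Suc.IH[OF closed[OF Suc.prems]] .
  finally show ?case
    by (simp only: funpow_Suc_right comp_def)
qed simp

text \<open>Iterating the doubling inequality gives \<open>(a 1 / p) ^ 2\<^sup>j \<le> a (2\<^sup>j) / p\<close>, which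
  is incompatible with the growth bound \<open>C * k ^ 2\<^sup>j\<close> unless \<open>a 1 / p \<le> k\<close>.\<close>

lemma le_if_power_doubling:
  fixes a :: "nat \<Rightarrow> real"
  assumes nonneg: "\<And>m. 0 \<le> a m" and p: "p > 0" and k: "k > 0"
    and doubling: "\<And>m. (a m)\<^sup>2 \<le> a (2 * m) * p" and growth: "\<And>m. a m \<le> C * k ^ m"
  shows "a 1 \<le> k * p"
proof -
  have iterate: "a 1 ^ (2 ^ j) * p \<le> a (2 ^ j) * p ^ (2 ^ j)" for j
  proof (induction j)
    case (Suc j)
    define M where "M = (2::nat) ^ j"
    have "a 1 ^ (2 * M) * p * p = (a 1 ^ M * p)\<^sup>2"
      by (simp add: power_mult_distrib power2_eq_square power_add[symmetric] mult_2)
    also have "\<dots> \<le> (a M * p ^ M)\<^sup>2"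
      using Suc.IH nonneg p by (intro power_mono) (simp_all add: M_def)
    also have "\<dots> = (a M)\<^sup>2 * p ^ (2 * M)"
      by (simp add: power_mult_distrib power2_eq_square power_add[symmetric] mult_2)
    also have "\<dots> \<le> a (2 * M) * p * p ^ (2 * M)"
      using doubling[of M] p by (simp add: mult_right_mono)
    finally have "(a 1 ^ (2 * M) * p) * p \<le> (a (2 * M) * p ^ (2 * M)) * p"
      by (simp add: algebra_simps)
    then show ?case
      using p by (simp add: M_def)
  qed simp
  show ?thesis
  proof (rule ccontr)
    assume "\<not> ?thesis"
    then have rho: "1 < a 1 / (k * p)"
      using k p by simp
    obtain n where n: "C / p < (a 1 / (k * p)) ^ n"
      using real_arch_pow[OF rho] by blast
    have "(a 1 / (k * p)) ^ n \<le> (a 1 / (k * p)) ^ (2 ^ n)"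
      using rho by (intro power_increasing) (simp_all add: less_imp_le)
    also have "\<dots> = (a 1 ^ (2 ^ n) * p) / (k ^ (2 ^ n) * p ^ (2 ^ n) * p)"
      using p by (simp add: power_divide power_mult_distrib)
    also have "\<dots> \<le> (a (2 ^ n) * p ^ (2 ^ n)) / (k ^ (2 ^ n) * p ^ (2 ^ n) * p)"
      using iterate[of n] k p by (intro divide_right_mono) simp_all
    also have "\<dots> \<le> (C * k ^ (2 ^ n) * p ^ (2 ^ n)) / (k ^ (2 ^ n) * p ^ (2 ^ n) * p)"
      using growth[of "2 ^ n"] k p by (intro divide_right_mono mult_right_mono) simp_all
    also have "\<dots> = C / p"
      using k p by simp
    finally show False
      using n by simp
  qed
qed

lemma energy_iterate_doubling:
  assumes A: "op_ge_id A" and U: "symmetric_op U" and dom: "opdom A \<subseteq> opdom U"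
    and P: "\<And>y. y \<in> opdom A \<Longrightarrow> P y \<in> opdom A" "\<And>y. y \<in> opdom A \<Longrightarrow> app A (P y) = app U y"
    and x: "x \<in> opdom A"
  shows "(cmod (ip ((P ^^ m) x) (app A x)))\<^sup>2 \<le> cmod (ip ((P ^^ (2 * m)) x) (app A x)) * Re (qform A x)"
proof -
  have sym: "symmetric_op A"
    using A by (rule op_ge_id_symmetric)
  have Pm: "(P ^^ m) x \<in> opdom A"
    using funpow_closed[of "opdom A" P] P(1) x by blast
  have P_symmetric: "ip (P a) (app A b) = ip a (app A (P b))" if "a \<in> opdom A" "b \<in> opdom A" for a b
    using symmetric_op_ip[OF sym P(1) that(2), of a] symmetric_op_ip[OF U, of a b] that dom
    by (auto simp: P(2))
  have "ip ((P ^^ m) ((P ^^ m) x)) (app A x) = ip ((P ^^ m) x) (app A ((P ^^ m) x))"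
    using funpow_symmetric[of "opdom A" P "\<lambda>a b. ip a (app A b)", OF P(1) P_symmetric Pm x] .
  then have "qform A ((P ^^ m) x) = ip ((P ^^ (2 * m)) x) (app A x)"
    using symmetric_op_ip[OF sym Pm Pm] by (simp add: qform_def funpow_add mult_2)
  moreover have "(cmod (ip ((P ^^ m) x) (app A x)))\<^sup>2 \<le> Re (qform A ((P ^^ m) x)) * Re (qform A x)"
    by (rule energy_cauchy_schwarz[OF A Pm x])
  ultimately show ?thesis
    using op_ge_id_qform_nonneg[OF A x] complex_Re_le_cmod
    by (metis mult_right_mono order_trans)
qed

lemma energy_iterate_growth:
  assumes A: "op_ge_id A" and "k \<ge> 0"
    and P: "\<And>y. y \<in> opdom A \<Longrightarrow> P y \<in> opdom A" "\<And>y. y \<in> opdom A \<Longrightarrow> app A (P y) = app U y"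
    and bound: "\<And>y. y \<in> opdom A \<Longrightarrow> vnorm (app U y) \<le> k * vnorm (app A y)"
    and x: "x \<in> opdom A"
  shows "cmod (ip ((P ^^ m) x) (app A x)) \<le> (vnorm (app A x))\<^sup>2 * k ^ m"
proof -
  have l2: "\<And>y. y \<in> opdom A \<Longrightarrow> y \<in> l2" "\<And>y. y \<in> opdom A \<Longrightarrow> app A y \<in> l2"
    using op_ge_id_is_operator[OF A] by (simp_all add: operator_dom_l2 operator_app_l2)
  have Pm: "(P ^^ m) x \<in> opdom A" for m
    using funpow_closed[of "opdom A" P] P(1) x by blast
  have growth: "vnorm (app A ((P ^^ m) x)) \<le> k ^ m * vnorm (app A x)" for m
  proof (induction m)
    case (Suc m)
    have "vnorm (app A ((P ^^ Suc m) x)) \<le> k * vnorm (app A ((P ^^ m) x))"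
      using bound[OF Pm] P(2)[OF Pm] by simp
    also have "\<dots> \<le> k * (k ^ m * vnorm (app A x))"
      using Suc.IH \<open>k \<ge> 0\<close> by (simp add: mult_left_mono)
    finally show ?case by simp
  qed simp
  have "cmod (ip ((P ^^ m) x) (app A x)) \<le> vnorm ((P ^^ m) x) * vnorm (app A x)"
    by (rule ip_cauchy_schwarz[OF l2(1)[OF Pm] l2(2)[OF x]])
  also have "\<dots> \<le> vnorm (app A ((P ^^ m) x)) * vnorm (app A x)"
    using op_ge_id_vnorm_le[OF A Pm] l2(2)[OF x] by (simp add: mult_right_mono)
  also have "\<dots> \<le> (k ^ m * vnorm (app A x)) * vnorm (app A x)"
    using growth[of m] l2(2)[OF x] by (simp add: mult_right_mono)
  finally show ?thesis
    by (simp add: power2_eq_square algebra_simps)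
qed

text \<open>The map \<open>P = A\<inverse> U\<close> is symmetric for the energy form
  \<open>\<langle>a, A b\<rangle>\<close>, and its powers grow at most like \<open>k\<^sup>m\<close>; the doubling trick then bounds its
  energy form by \<open>k\<close>, as a spectral radius would.\<close>

lemma qform_bound_if_vnorm_app_bound:
  assumes A: "op_ge_id A" and U: "symmetric_op U" and dom: "opdom A \<subseteq> opdom U" and "k > 0"
    and bound: "\<And>y. y \<in> opdom A \<Longrightarrow> vnorm (app U y) \<le> k * vnorm (app A y)"
    and x: "x \<in> opdom A"
  shows "cmod (qform U x) \<le> k * Re (qform A x)"
proof (cases "vnorm x = 0")
  case True
  then have "x = vzero"
    using vnorm_eq_0_iff operator_dom_l2[OF op_ge_id_is_operator[OF A] x] by simp
  then show ?thesis
    using operator_vzero[OF symmetric_op_is_operator[OF U]] op_ge_id_qform_nonneg[OF A x] \<open>k > 0\<close>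
    by (simp add: qform_def)
next
  case False
  have opU: "is_operator U"
    using U by (rule symmetric_op_is_operator)
  define P where "P y = op_inv A (app U y)" for y
  have P: "P y \<in> opdom A" "app A (P y) = app U y" if "y \<in> opdom A" for y
    using op_inv_in_opdom[OF A operator_app_l2[OF opU]] app_op_inv[OF A operator_app_l2[OF opU]]
      that dom by (auto simp: P_def)
  have "0 < (vnorm x)\<^sup>2"
    using False by simp
  then have "Re (qform A x) > 0"
    using op_ge_id_qform[OF A x] by linarith
  then have "cmod (ip ((P ^^ 1) x) (app A x)) \<le> k * Re (qform A x)"
    using \<open>k > 0\<close> energy_iterate_doubling[OF A U dom P x] energy_iterate_growth[OF A _ P bound x]
    by (intro le_if_power_doubling[where a="\<lambda>m. cmod (ip ((P ^^ m) x) (app A x))"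
          and C="(vnorm (app A x))\<^sup>2"]) simp_all
  moreover have "ip (P x) (app A x) = qform U x"
    using symmetric_op_ip[OF op_ge_id_symmetric[OF A] P(1)[OF x] x] by (simp add: qform_def P(2)[OF x])
  ultimately show ?thesis
    by simp
qed

lemma vnorm_app_shift_ge:
  assumes A: "op_ge_id A" and "\<mu> \<ge> 0" and x: "x \<in> opdom A"
  shows "vnorm (app A x) \<le> vnorm (app (op_affine 1 \<mu> A) x)"
    and "\<mu> * vnorm x \<le> vnorm (app (op_affine 1 \<mu> A) x)"
proof -
  have l2: "x \<in> l2" "app A x \<in> l2"
    using op_ge_id_is_operator[OF A] x by (simp_all add: operator_dom_l2 operator_app_l2)
  have "(vnorm (app (op_affine 1 \<mu> A) x))\<^sup>2 =
      (vnorm (app A x))\<^sup>2 + 2 * (\<mu> * Re (qform A x)) + (\<mu> * vnorm x)\<^sup>2"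
    using vnorm_vadd_power2[of "app A x" "smul (complex_of_real \<mu>) x"] l2 \<open>\<mu> \<ge> 0\<close>
    by (simp add: ip_smul_right vnorm_smul qform_def)
  moreover have "0 \<le> \<mu> * Re (qform A x)"
    using op_ge_id_qform_nonneg[OF A x] \<open>\<mu> \<ge> 0\<close> by simp
  ultimately have "(vnorm (app A x))\<^sup>2 \<le> (vnorm (app (op_affine 1 \<mu> A) x))\<^sup>2"
    and "(\<mu> * vnorm x)\<^sup>2 \<le> (vnorm (app (op_affine 1 \<mu> A) x))\<^sup>2"
    by simp_all
  then show "vnorm (app A x) \<le> vnorm (app (op_affine 1 \<mu> A) x)"
    and "\<mu> * vnorm x \<le> vnorm (app (op_affine 1 \<mu> A) x)"
    using l2 by (auto elim!: power2_le_imp_le)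
qed

lemma rel_compact_form_bound:
  assumes A: "op_ge_id A" and U: "symmetric_op U" and rc: "rel_compact U A" and "e > 0"
  shows "\<exists>D. \<forall>x\<in>opdom A. cmod (qform U x) \<le> e * Re (qform A x) + D * (vnorm x)\<^sup>2"
proof -
  have op: "is_operator A"
    using A by (rule op_ge_id_is_operator)
  obtain D where D: "\<And>x. x \<in> opdom A \<Longrightarrow> vnorm (app U x) \<le> e / 2 * vnorm (app A x) + D * vnorm x"
    using rel_compact_relative_bound[OF op U rc, of "e / 2"] \<open>e > 0\<close> by auto
  define \<mu> where "\<mu> = 2 * max D 0 / e"
  have \<mu>: "\<mu> \<ge> 0" "max D 0 = e / 2 * \<mu>"
    using \<open>e > 0\<close> by (simp_all add: \<mu>_def)
  define B where "B = op_affine 1 \<mu> A"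
  have B: "op_ge_id B"
    unfolding B_def using \<mu> by (intro op_ge_id_affine[OF A]) simp_all
  have "vnorm (app U x) \<le> e * vnorm (app B x)" if x: "x \<in> opdom B" for x
  proof -
    have x': "x \<in> opdom A" "x \<in> l2"
      using x op by (simp_all add: B_def operator_dom_l2)
    have "vnorm (app U x) \<le> e / 2 * vnorm (app A x) + e / 2 * (\<mu> * vnorm x)"
      using D[OF x'(1)] mult_right_mono[OF max.cobounded1[of D 0] vnorm_nonneg[OF x'(2)]] \<mu>
      by simp
    also have "\<dots> \<le> e / 2 * vnorm (app B x) + e / 2 * vnorm (app B x)"
      using vnorm_app_shift_ge[OF A \<mu>(1) x'(1)] \<open>e > 0\<close> unfolding B_def
      by (intro add_mono mult_left_mono) simp_all
    finally show ?thesis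
      by simp
  qed
  then have "cmod (qform U x) \<le> e * Re (qform B x)" if "x \<in> opdom A" for x
    using qform_bound_if_vnorm_app_bound[OF B U _ \<open>e > 0\<close>] rel_compact_dom[OF rc] that
    by (auto simp: B_def)
  then show ?thesis
    using Re_qform_op_affine[OF op, of _ 1 \<mu>] unfolding B_def
    by (intro exI[of _ "e * \<mu>"]) (simp add: algebra_simps)
qed

lemma weak_to_zero_op_inv:
  assumes R: "op_ge_id R" and x: "\<And>n. x n \<in> l2" and weak: "weak_to_zero x"
  shows "weak_to_zero (\<lambda>n. op_inv R (x n))"
  unfolding weak_to_zero_def
proof
  fix y assume y: "y \<in> l2"
  have "ip (op_inv R (x n)) y = ip (x n) (op_inv R y)" for n
    using symmetric_op_ip[OF op_ge_id_symmetric[OF R] op_inv_in_opdom[OF R x] op_inv_in_opdom[OF R y]]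
    by (simp add: app_op_inv[OF R x] app_op_inv[OF R y])
  moreover have "op_inv R y \<in> l2"
    using operator_dom_l2[OF op_ge_id_is_operator[OF R] op_inv_in_opdom[OF R y]] .
  ultimately show "(\<lambda>n. ip (op_inv R (x n)) y) \<longlonglongrightarrow> 0"
    using weak by (simp add: weak_to_zero_def)
qed

lemma resolvent_split:
  assumes A: "op_ge_id A" and "t > 0" and x: "x \<in> opdom A"
  defines "w \<equiv> op_inv (op_affine t 1 A) x"
  shows "w \<in> opdom A" and "vsub x w = smul (complex_of_real t) (app A w)"
    and "vnorm w \<le> vnorm x" and "2 * t * (vnorm (app A w))\<^sup>2 \<le> Re (qform A x)"
    and "Re (qform A (vsub x w)) \<le> Re (qform A x)"
proof -
  have op: "is_operator A" and sym: "symmetric_op A"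
    using A by (simp_all add: op_ge_id_is_operator op_ge_id_symmetric)
  have R: "op_ge_id (op_affine t 1 A)"
    using A \<open>t > 0\<close> by (intro op_ge_id_affine) simp_all
  have x_l2: "x \<in> l2"
    using op x by (simp add: operator_dom_l2)
  show w: "w \<in> opdom A"
    using op_inv_in_opdom[OF R x_l2] by (simp add: w_def)
  have Rw: "app (op_affine t 1 A) w = x"
    using app_op_inv[OF R x_l2] by (simp add: w_def)
  show "vnorm w \<le> vnorm x"
    using op_ge_id_vnorm_le[OF R, of w] w Rw by simp
  define z where "z = vsub x w"
  have z: "z \<in> opdom A" "app A z = vsub (app A x) (app A w)"
    using operator_vsub[OF op x w] by (simp_all add: z_def)
  have l2: "w \<in> l2" "app A w \<in> l2" "z \<in> l2" "app A z \<in> l2"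
    using operator_dom_l2[OF op] operator_app_l2[OF op] w z(1) by blast+
  have "x = vadd (smul (complex_of_real t) (app A w)) w"
    using Rw by simp
  then show zt: "vsub x w = smul (complex_of_real t) (app A w)"
    by (simp add: vsub_def vadd_def smul_def)
  have "x = vadd w z" "app A x = vadd (app A w) (app A z)"
    using z(2) by (simp_all add: z_def vadd_def vsub_def fun_eq_iff)
  then have "qform A x = qform A w + ip (app A w) z + ip (app A z) w + qform A z"
    using l2 by (simp add: qform_def ip_vadd_left ip_vadd_right)
  moreover have "ip (app A w) z = complex_of_real (t * (vnorm (app A w))\<^sup>2)"
    using l2 zt by (simp add: z_def ip_smul_right ip_self)
  moreover have "ip (app A z) w = complex_of_real (t * (vnorm (app A w))\<^sup>2)"
    using symmetric_op_ip[OF sym z(1) w] l2 zt by (simp add: z_def ip_smul_left ip_self)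
  ultimately have "Re (qform A x) = Re (qform A w) + 2 * t * (vnorm (app A w))\<^sup>2 + Re (qform A z)"
    by simp
  moreover have "0 \<le> Re (qform A w)" "0 \<le> Re (qform A z)"
    using op_ge_id_qform_nonneg[OF A] w z(1) by simp_all
  moreover have "0 \<le> 2 * t * (vnorm (app A w))\<^sup>2"
    using \<open>t > 0\<close> by simp
  ultimately show "2 * t * (vnorm (app A w))\<^sup>2 \<le> Re (qform A x)"
    and "Re (qform A (vsub x w)) \<le> Re (qform A x)"
    by (simp_all add: z_def)
qed

lemma qform_vadd_bound:
  assumes U: "symmetric_op U" and w: "w \<in> opdom U" and z: "z \<in> opdom U"
  shows "cmod (qform U (vadd w z)) \<le> vnorm (app U w) * (vnorm w + 2 * vnorm z) + cmod (qform U z)"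
proof -
  have op: "is_operator U"
    using U by (rule symmetric_op_is_operator)
  have l2: "w \<in> l2" "z \<in> l2" "app U w \<in> l2" "app U z \<in> l2"
    using op w z by (simp_all add: operator_dom_l2 operator_app_l2)
  define a b c where "a = ip (app U w) w" and "b = ip (app U w) z" and "c = ip z (app U w)"
  have "qform U (vadd w z) = a + b + c + qform U z"
    using operator_vadd[OF op w z] symmetric_op_ip[OF U z w] l2
    by (simp add: a_def b_def c_def qform_def ip_vadd_left ip_vadd_right)
  moreover have "cmod (a + b + c + qform U z) \<le> cmod a + cmod b + cmod c + cmod (qform U z)"
    using norm_triangle_ineq[of "a + b + c" "qform U z"] norm_triangle_ineq[of "a + b" c]
      norm_triangle_ineq[of a b]
    by linarith
  ultimately have "cmod (qform U (vadd w z)) \<le> cmod a + cmod b + cmod c + cmod (qform U z)"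
    by simp
  moreover have "cmod a \<le> vnorm (app U w) * vnorm w" "cmod b \<le> vnorm (app U w) * vnorm z"
    "cmod c \<le> vnorm (app U w) * vnorm z"
    using ip_cauchy_schwarz[OF l2(3,1)] ip_cauchy_schwarz[OF l2(3,2)] ip_cauchy_schwarz[OF l2(2,3)]
    by (simp_all add: a_def b_def c_def mult.commute)
  moreover have "vnorm (app U w) * (vnorm w + 2 * vnorm z) =
      vnorm (app U w) * vnorm w + vnorm (app U w) * vnorm z + vnorm (app U w) * vnorm z"
    by (simp add: algebra_simps)
  ultimately show ?thesis
    by linarith
qed

lemma qform_resolvent_estimate:
  assumes A: "op_ge_id A" and U: "symmetric_op U" and rc: "rel_compact U A"
    and form: "\<And>z. z \<in> opdom A \<Longrightarrow> cmod (qform U z) \<le> \<epsilon> * Re (qform A z) + D * (vnorm z)\<^sup>2"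
    and "\<epsilon> \<ge> 0" "D \<ge> 0" "t > 0"
    and x: "x \<in> opdom A" "vnorm x \<le> 1" and M: "Re (qform A x) \<le> M"
  shows "cmod (qform U x) \<le> 5 * vnorm (app U (op_inv (op_affine t 1 A) x)) + \<epsilon> * M + D * (t / 2) * M"
proof -
  define w where "w = op_inv (op_affine t 1 A) x"
  define z where "z = vsub x w"
  have op: "is_operator A" and opU: "is_operator U"
    using A U by (simp_all add: op_ge_id_is_operator symmetric_op_is_operator)
  note split = resolvent_split[OF A \<open>t > 0\<close> x(1), folded w_def, folded z_def]
  have z: "z \<in> opdom A"
    using operator_vsub[OF op x(1) split(1)] by (simp add: z_def)
  have l2: "x \<in> l2" "w \<in> l2" "app A w \<in> l2" "app U w \<in> l2"
    using op opU x(1) split(1) rel_compact_dom[OF rc]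
    by (simp_all add: operator_dom_l2 operator_app_l2)
  have "vnorm w \<le> 1"
    using split(3) x(2) by simp
  moreover have "vnorm z \<le> 2"
    using vnorm_vsub_triangle[OF l2(1,2)] split(3) x(2) by (simp add: z_def)
  ultimately have "vnorm (app U w) * (vnorm w + 2 * vnorm z) \<le> vnorm (app U w) * 5"
    using l2(4) by (intro mult_left_mono) simp_all
  moreover have "(vnorm z)\<^sup>2 \<le> t / 2 * M"
  proof -
    have "(vnorm z)\<^sup>2 = t / 2 * (2 * t * (vnorm (app A w))\<^sup>2)"
      using split(2) l2(3) \<open>t > 0\<close> by (simp add: vnorm_smul power2_eq_square)
    also have "\<dots> \<le> t / 2 * M"
      using split(4) M \<open>t > 0\<close> by simp
    finally show ?thesis .
  qed
  then have "cmod (qform U z) \<le> \<epsilon> * M + D * (t / 2) * M"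
    using form[OF z] split(5) M \<open>\<epsilon> \<ge> 0\<close> \<open>D \<ge> 0\<close>
    by (smt (verit) mult_left_mono mult.assoc)
  moreover have "x = vadd w z"
    by (simp add: z_def vadd_def vsub_def)
  then have "cmod (qform U x) \<le> vnorm (app U w) * (vnorm w + 2 * vnorm z) + cmod (qform U z)"
    using qform_vadd_bound[OF U rel_compact_dom[OF rc split(1)] rel_compact_dom[OF rc z]]
    by simp
  ultimately show ?thesis
    unfolding w_def[symmetric] by linarith
qed

lemma le_power2_plus_one: "(v::real) \<le> v\<^sup>2 + 1"
proof -
  have "2 * v \<le> v\<^sup>2 + 1"
    using sum_squares_bound[of v 1] by simp
  moreover have "0 \<le> v\<^sup>2"
    by simp
  ultimately show ?thesis
    by linarith
qed

lemma rel_compact_vnorm_resolvent_tendsto_zero: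
  assumes A: "op_ge_id A" and U: "symmetric_op U" and rc: "rel_compact U A" and "t > 0"
    and x: "\<And>n. x n \<in> opdom A" "\<And>n. vnorm (x n) \<le> 1" and weak: "weak_to_zero x"
    and M: "\<And>n. Re (qform A (x n)) \<le> M"
  shows "(\<lambda>n. vnorm (app U (op_inv (op_affine t 1 A) (x n)))) \<longlonglongrightarrow> 0"
proof (rule rel_compact_vnorm_tendsto_zero[OF U rc])
  define w where "w n = op_inv (op_affine t 1 A) (x n)" for n
  note split = resolvent_split[OF A \<open>t > 0\<close> x(1), folded w_def]
  show "\<And>n. w n \<in> opdom A"
    by (rule split(1))
  have "vnorm (w n) \<le> 1" for n
    using split(3)[of n] x(2)[of n] by linarith
  then show "bounded_seq w"
    unfolding bounded_seq_def by blast
  have "(vnorm (app A (w n)))\<^sup>2 \<le> M / (2 * t)" for n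
    using split(4)[of n] M[of n] \<open>t > 0\<close> by (simp add: field_simps)
  then have "vnorm (app A (w n)) \<le> M / (2 * t) + 1" for n
    using le_power2_plus_one[of "vnorm (app A (w n))"] by (meson add_right_mono order_trans)
  then show "bounded_seq (\<lambda>n. app A (w n))"
    unfolding bounded_seq_def by blast
  show "weak_to_zero w"
    unfolding w_def using A \<open>t > 0\<close> x(1) weak op_ge_id_is_operator[OF A]
    by (intro weak_to_zero_op_inv op_ge_id_affine) (simp_all add: operator_dom_l2)
qed

text \<open>Split \<open>x\<^sub>n = w\<^sub>n + z\<^sub>n\<close> with \<open>w\<^sub>n = (t A + 1)\<inverse> x\<^sub>n\<close>: compactness gives
  \<open>U w\<^sub>n \<rightarrow> 0\<close>, while \<open>z\<^sub>n\<close> has bounded energy and norm \<open>O(\<surd>t)\<close>, so the form bound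
  with a small relative bound controls \<open>\<langle>U z\<^sub>n, z\<^sub>n\<rangle>\<close>.\<close>

lemma rel_compact_qform_tendsto_zero_ge_id:
  assumes A: "op_ge_id A" and U: "symmetric_op U" and rc: "rel_compact U A"
    and x: "\<And>n. x n \<in> opdom A" "\<And>n. vnorm (x n) \<le> 1" and weak: "weak_to_zero x"
    and M: "\<And>n. Re (qform A (x n)) \<le> M"
  shows "(\<lambda>n. qform U (x n)) \<longlonglongrightarrow> 0"
proof (rule LIMSEQ_I)
  fix \<eta> :: real assume "\<eta> > 0"
  have "M \<ge> 0"
    using op_ge_id_qform_nonneg[OF A x(1), of 0] M[of 0] by linarith
  define \<epsilon> where "\<epsilon> = \<eta> / (4 * (M + 1))"
  have "\<epsilon> \<ge> 0" and small_\<epsilon>: "\<epsilon> * M \<le> \<eta> / 4"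
    using \<open>\<eta> > 0\<close> \<open>M \<ge> 0\<close> by (simp_all add: \<epsilon>_def field_simps)
  obtain D where D: "\<And>z. z \<in> opdom A \<Longrightarrow> cmod (qform U z) \<le> \<epsilon> * Re (qform A z) + D * (vnorm z)\<^sup>2"
    using rel_compact_form_bound[OF A U rc, of \<epsilon>] \<open>\<eta> > 0\<close> \<open>M \<ge> 0\<close> by (auto simp: \<epsilon>_def)
  define D' where "D' = max D 0"
  have D': "cmod (qform U z) \<le> \<epsilon> * Re (qform A z) + D' * (vnorm z)\<^sup>2" if "z \<in> opdom A" for z
    using D[OF that] mult_right_mono[OF max.cobounded1[of D 0] zero_le_power2[of "vnorm z"]]
    by (simp add: D'_def)
  define t where "t = \<eta> / (4 * (D' + 1) * (M + 1))"
  have "t > 0" "D' \<ge> 0"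
    using \<open>\<eta> > 0\<close> \<open>M \<ge> 0\<close> by (simp_all add: t_def D'_def)
  have small_t: "D' * (t / 2) * M \<le> \<eta> / 8"
  proof -
    have "D' * M \<le> (D' + 1) * (M + 1)"
      using \<open>D' \<ge> 0\<close> \<open>M \<ge> 0\<close> by (simp add: algebra_simps)
    then have le1: "D' * M / ((D' + 1) * (M + 1)) \<le> 1"
      using \<open>D' \<ge> 0\<close> \<open>M \<ge> 0\<close> by simp
    have "D' * (t / 2) * M = \<eta> / 8 * (D' * M / ((D' + 1) * (M + 1)))"
      using \<open>D' \<ge> 0\<close> \<open>M \<ge> 0\<close> by (simp add: t_def field_simps)
    also have "\<dots> \<le> \<eta> / 8 * 1"
      using le1 \<open>\<eta> > 0\<close> by (intro mult_left_mono) simp_all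
    finally show ?thesis
      by simp
  qed
  have "\<eta> / 10 > 0"
    using \<open>\<eta> > 0\<close> by simp
  then have "\<forall>\<^sub>F n in sequentially. vnorm (app U (op_inv (op_affine t 1 A) (x n))) < \<eta> / 10"
    by (rule order_tendstoD(2)[OF rel_compact_vnorm_resolvent_tendsto_zero[OF A U rc \<open>t > 0\<close> x weak M]])
  then have "\<forall>\<^sub>F n in sequentially. cmod (qform U (x n)) < \<eta>"
  proof (rule eventually_mono)
    fix n assume "vnorm (app U (op_inv (op_affine t 1 A) (x n))) < \<eta> / 10"
    moreover have "cmod (qform U (x n)) \<le>
        5 * vnorm (app U (op_inv (op_affine t 1 A) (x n))) + \<epsilon> * M + D' * (t / 2) * M"
      by (rule qform_resolvent_estimate[OF A U rc _ \<open>\<epsilon> \<ge> 0\<close> \<open>D' \<ge> 0\<close> \<open>t > 0\<close> x(1,2) M]) (rule D')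
    ultimately show "cmod (qform U (x n)) < \<eta>"
      using small_\<epsilon> small_t \<open>\<eta> > 0\<close> by linarith
  qed
  then show "\<exists>N. \<forall>n\<ge>N. norm (qform U (x n) - 0) < \<eta>"
    by (simp add: eventually_sequentially)
qed

section \<open>Semibounded operators\<close>

lemma semibounded_op_ge_id_affine:
  assumes A: "selfadjoint_op A" and "semibounded A"
  obtains s c where "\<bar>s\<bar> = 1" and "op_ge_id (op_affine s c A)"
proof -
  obtain c where "(\<forall>x\<in>opdom A. c * (vnorm x)\<^sup>2 \<le> Re (qform A x)) \<or>
      (\<forall>x\<in>opdom A. Re (qform A x) \<le> c * (vnorm x)\<^sup>2)"
    using \<open>semibounded A\<close> unfolding semibounded_def qform_def by blast
  then show ?thesis
  proof
    assume "\<forall>x\<in>opdom A. c * (vnorm x)\<^sup>2 \<le> Re (qform A x)"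
    then have "op_ge_id (op_affine 1 (1 - c) A)"
      by (intro op_ge_id_affineI[OF A]) (auto simp: algebra_simps)
    then show ?thesis
      using that[of 1] by simp
  next
    assume "\<forall>x\<in>opdom A. Re (qform A x) \<le> c * (vnorm x)\<^sup>2"
    then have "op_ge_id (op_affine (-1) (1 + c) A)"
      by (intro op_ge_id_affineI[OF A]) (auto simp: algebra_simps)
    then show ?thesis
      using that[of "-1"] by simp
  qed
qed

lemma rel_compact_op_affine:
  assumes A: "is_operator A" and "s \<noteq> 0" and rc: "rel_compact U A"
  shows "rel_compact U (op_affine s c A)"
  unfolding rel_compact_def
proof (intro conjI allI impI)
  show "opdom (op_affine s c A) \<subseteq> opdom U"
    using rc by (simp add: rel_compact_def)
  fix x assume hyp: "(\<forall>n. x n \<in> opdom (op_affine s c A)) \<and> bounded_seq x \<and>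
      bounded_seq (\<lambda>n. app (op_affine s c A) (x n))"
  then obtain M1 M2 where x: "\<And>n. x n \<in> opdom A" and M1: "\<And>n. vnorm (x n) \<le> M1"
    and M2: "\<And>n. vnorm (app (op_affine s c A) (x n)) \<le> M2"
    unfolding bounded_seq_def by auto
  have "vnorm (app A (x n)) \<le> (M2 + \<bar>c\<bar> * M1) / \<bar>s\<bar>" for n
  proof -
    have l2: "x n \<in> l2" "app A (x n) \<in> l2"
      using A x by (simp_all add: operator_dom_l2 operator_app_l2)
    define v where "v = vsub (app (op_affine s c A) (x n)) (smul (complex_of_real c) (x n))"
    have v: "v \<in> l2"
      using l2 by (simp add: v_def)
    have "vnorm v \<le> M2 + \<bar>c\<bar> * M1"
      using vnorm_vsub_triangle[of "app (op_affine s c A) (x n)" "smul (complex_of_real c) (x n)"]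
        M2[of n] mult_left_mono[OF M1[of n], of "\<bar>c\<bar>"] l2
      by (simp add: v_def vnorm_smul)
    moreover have "app A (x n) = smul (complex_of_real (1 / s)) v"
      using \<open>s \<noteq> 0\<close> by (simp add: v_def vadd_def vsub_def smul_def fun_eq_iff field_simps)
    then have "vnorm (app A (x n)) = vnorm v / \<bar>s\<bar>"
      using v by (simp add: vnorm_smul norm_divide)
    ultimately show ?thesis
      by (simp add: divide_right_mono)
  qed
  then have "bounded_seq (\<lambda>n. app A (x n))"
    unfolding bounded_seq_def by blast
  then show "has_conv_subseq (\<lambda>n. app U (x n))"
    using rel_compactD[OF rc, of x, OF x] hyp by blast
qed

lemma Bseq_Re: "Bseq f \<Longrightarrow> Bseq (\<lambda>n. Re (f n))"
  by (rule Bseq_eventually_mono[of _ f]) (simp_all add: abs_Re_le_cmod)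

lemma Bseq_Im: "Bseq f \<Longrightarrow> Bseq (\<lambda>n. Im (f n))"
  by (rule Bseq_eventually_mono[of _ f]) (simp_all add: abs_Im_le_cmod)

lemma qform_rel_compact_tendsto_zero:
  assumes C: "selfadjoint_op C" "semibounded C" and U: "symmetric_op U" and rc: "rel_compact U C"
    and x: "\<And>n. x n \<in> opdom C" "\<And>n. vnorm (x n) = 1" and weak: "weak_to_zero x"
    and bounded: "Bseq (\<lambda>n. Re (qform C (x n)))"
  shows "(\<lambda>n. qform U (x n)) \<longlonglongrightarrow> 0"
proof -
  obtain s c where s: "\<bar>s\<bar> = 1" and ge_id: "op_ge_id (op_affine s c C)"
    using semibounded_op_ge_id_affine[OF C] .
  have op: "is_operator C"
    using C(1) by (rule selfadjoint_op_is_operator)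
  obtain K where K: "\<And>n. \<bar>Re (qform C (x n))\<bar> \<le> K"
    using bounded by (auto simp: Bseq_def)
  show ?thesis
  proof (rule rel_compact_qform_tendsto_zero_ge_id[OF ge_id U])
    show "rel_compact U (op_affine s c C)"
      using rel_compact_op_affine[OF op _ rc] s by auto
    show "\<And>n. x n \<in> opdom (op_affine s c C)" "\<And>n. vnorm (x n) \<le> 1"
      using x by simp_all
    show "weak_to_zero x"
      by (rule weak)
    fix n
    have "s * Re (qform C (x n)) \<le> K"
      using K[of n] s abs_le_iff abs_mult[of s] by (metis abs_ge_self mult_1 order_trans)
    then show "Re (qform (op_affine s c C) (x n)) \<le> K + c"
      using Re_qform_op_affine[OF op x(1)] x(2) by simp
  qed
qed

lemma Bseq_Re_qform_if_perturbed:
  assumes C: "selfadjoint_op C" "semibounded C" and U: "symmetric_op U" and rc: "rel_compact U C"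
    and x: "\<And>n. x n \<in> opdom C" "\<And>n. vnorm (x n) = 1"
    and bounded: "Bseq (\<lambda>n. Re (qform C (x n)) + Re (qform U (x n)))"
  shows "Bseq (\<lambda>n. Re (qform C (x n)))"
proof -
  obtain s c where s: "\<bar>s\<bar> = 1" and ge_id: "op_ge_id (op_affine s c C)"
    using semibounded_op_ge_id_affine[OF C] .
  have op: "is_operator C"
    using C(1) by (rule selfadjoint_op_is_operator)
  obtain D where D: "\<And>y. y \<in> opdom C \<Longrightarrow>
      cmod (qform U y) \<le> 1/2 * Re (qform (op_affine s c C) y) + D * (vnorm y)\<^sup>2"
    using rel_compact_form_bound[OF ge_id U, of "1/2"] rel_compact_op_affine[OF op _ rc] s by auto
  obtain K where K: "\<And>n. \<bar>Re (qform C (x n)) + Re (qform U (x n))\<bar> \<le> K"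
    using bounded by (auto simp: Bseq_def)
  have "\<bar>Re (qform C (x n))\<bar> \<le> 2 * K + c + 2 * D" for n
  proof -
    define a u q where "a = Re (qform C (x n))" and "u = Re (qform U (x n))" and "q = s * a"
    have "\<bar>u\<bar> \<le> cmod (qform U (x n))"
      unfolding u_def by (rule abs_Re_le_cmod)
    also have "\<dots> \<le> 1/2 * (q + c) + D"
      using D[OF x(1)[of n]] Re_qform_op_affine[OF op x(1)[of n], of s c] x(2)[of n]
      by (simp add: a_def q_def)
    also have "q \<le> \<bar>a\<bar>"
      using s by (metis abs_ge_self abs_mult mult_1 q_def)
    finally have u: "\<bar>u\<bar> \<le> \<bar>a\<bar> / 2 + c / 2 + D"
      by (simp add: add_divide_distrib)
    have "\<bar>a\<bar> \<le> \<bar>a + u\<bar> + \<bar>u\<bar>"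
      by linarith
    also have "\<dots> \<le> K + (\<bar>a\<bar> / 2 + c / 2 + D)"
      using K[of n] u by (intro add_mono) (simp_all add: a_def u_def)
    finally show ?thesis
      unfolding a_def[symmetric] by linarith
  qed
  then show ?thesis
    by (intro BseqI') simp
qed

section \<open>The essential numerical range\<close>

lemma opdom_op_plus [simp]: "opdom (op_plus T S) = opdom T \<inter> opdom S"
  by (simp add: op_plus_def opdom_def)

lemma app_op_plus [simp]: "app (op_plus T S) x = vadd (app T x) (app S x)"
  by (simp add: op_plus_def app_def)

lemma opdom_op_re_im [simp]: "opdom (op_re_im A B) = opdom A \<inter> opdom B"
  by (simp add: op_re_im_def opdom_def)

lemma app_op_re_im [simp]: "app (op_re_im A B) x = vadd (app A x) (smul \<i> (app B x))"
  by (simp add: op_re_im_def app_def)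

lemma is_operator_op_re_im:
  assumes A: "is_operator A" and B: "is_operator B"
  shows "is_operator (op_re_im A B)"
  unfolding is_operator_def
proof (intro conjI ballI allI)
  show "opdom (op_re_im A B) \<subseteq> l2" "vzero \<in> opdom (op_re_im A B)"
    using A B by (auto simp: is_operator_def)
  show "app (op_re_im A B) ` opdom (op_re_im A B) \<subseteq> l2"
    using A B by (auto simp: operator_app_l2)
  fix x y d assume x: "x \<in> opdom (op_re_im A B)"
  then show "smul d x \<in> opdom (op_re_im A B)"
    and "app (op_re_im A B) (smul d x) = smul d (app (op_re_im A B) x)"
    using operator_smul[OF A, of x d] operator_smul[OF B, of x d]
    by (simp_all add: vadd_def smul_def fun_eq_iff algebra_simps)
  assume y: "y \<in> opdom (op_re_im A B)"
  with x show "vadd x y \<in> opdom (op_re_im A B)"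
    and "app (op_re_im A B) (vadd x y) = vadd (app (op_re_im A B) x) (app (op_re_im A B) y)"
    using operator_vadd[OF A, of x y] operator_vadd[OF B, of x y]
    by (simp_all add: vadd_def smul_def fun_eq_iff algebra_simps)
qed

lemma qform_op_plus:
  assumes "is_operator T" "is_operator S" "x \<in> opdom T" "x \<in> opdom S"
  shows "qform (op_plus T S) x = qform T x + qform S x"
  using assms by (simp add: qform_def ip_vadd_left operator_dom_l2 operator_app_l2)

lemma qform_op_re_im:
  assumes "is_operator A" "is_operator B" "x \<in> opdom A" "x \<in> opdom B"
  shows "qform (op_re_im A B) x = qform A x + \<i> * qform B x"
  using assms by (simp add: qform_def ip_vadd_left ip_smul_left operator_dom_l2 operator_app_l2)

lemma Re_Im_qform_op_re_im:
  assumes A: "symmetric_op A" and B: "symmetric_op B" and x: "x \<in> opdom A" "x \<in> opdom B"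
  shows "Re (qform (op_re_im A B) x) = Re (qform A x)"
    and "Im (qform (op_re_im A B) x) = Re (qform B x)"
proof -
  have "qform (op_re_im A B) x =
      complex_of_real (Re (qform A x)) + \<i> * complex_of_real (Re (qform B x))"
    using qform_op_re_im[OF symmetric_op_is_operator[OF A] symmetric_op_is_operator[OF B] x]
    by (simp only: qform_real[OF A x(1)] qform_real[OF B x(2)])
  then show "Re (qform (op_re_im A B) x) = Re (qform A x)"
    and "Im (qform (op_re_im A B) x) = Re (qform B x)"
    by simp_all
qed

lemma ess_num_range_op_plus_eq:
  assumes T: "is_operator T" and S: "is_operator S" and dom: "opdom T \<subseteq> opdom S"
    and vanish: "\<And>x. (\<And>n. x n \<in> opdom T) \<Longrightarrow> (\<And>n. vnorm (x n) = 1) \<Longrightarrow> weak_to_zero x \<Longrightarrow>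
      Bseq (\<lambda>n. qform T (x n)) \<or> Bseq (\<lambda>n. qform (op_plus T S) (x n)) \<Longrightarrow>
      (\<lambda>n. qform S (x n)) \<longlonglongrightarrow> 0"
  shows "ess_num_range T = ess_num_range (op_plus T S)"
proof -
  have dom_plus: "opdom (op_plus T S) = opdom T"
    using dom by auto
  have plus: "qform (op_plus T S) (x n) = qform T (x n) + qform S (x n)"
    if "\<And>n. x n \<in> opdom T" for x n
    using qform_op_plus[OF T S that] dom that by blast
  show ?thesis
  proof (intro equalityI subsetI)
    fix l assume "l \<in> ess_num_range T"
    then obtain x where x: "\<And>n. x n \<in> opdom T" "\<And>n. vnorm (x n) = 1" and weak: "weak_to_zero x"
      and lim: "(\<lambda>n. qform T (x n)) \<longlonglongrightarrow> l"
      unfolding ess_num_range_def qform_def by blast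
    have "(\<lambda>n. qform S (x n)) \<longlonglongrightarrow> 0"
      using vanish[OF x weak] convergent_imp_Bseq[OF convergentI[OF lim]] by blast
    from tendsto_add[OF lim this] have "(\<lambda>n. qform (op_plus T S) (x n)) \<longlonglongrightarrow> l"
      using plus[of x, OF x(1)] by simp
    then show "l \<in> ess_num_range (op_plus T S)"
      using x weak dom_plus unfolding ess_num_range_def qform_def by blast
  next
    fix l assume "l \<in> ess_num_range (op_plus T S)"
    then obtain x where x: "\<And>n. x n \<in> opdom T" "\<And>n. vnorm (x n) = 1" and weak: "weak_to_zero x"
      and lim: "(\<lambda>n. qform (op_plus T S) (x n)) \<longlonglongrightarrow> l"
      unfolding ess_num_range_def qform_def dom_plus by blast
    have "(\<lambda>n. qform S (x n)) \<longlonglongrightarrow> 0"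
      using vanish[OF x weak] convergent_imp_Bseq[OF convergentI[OF lim]] by blast
    from tendsto_diff[OF lim this] have "(\<lambda>n. qform T (x n)) \<longlonglongrightarrow> l"
      using plus[of x, OF x(1)] by simp
    then show "l \<in> ess_num_range T"
      using x weak unfolding ess_num_range_def qform_def by blast
  qed
qed

lemma Bseq_Re_qform_re_im_parts:
  assumes A: "symmetric_op A" and B: "symmetric_op B" and U: "symmetric_op U" and V: "symmetric_op V"
    and x: "\<And>n. x n \<in> opdom A" "\<And>n. x n \<in> opdom B" "\<And>n. x n \<in> opdom U" "\<And>n. x n \<in> opdom V"
    and bounded: "Bseq (\<lambda>n. qform (op_re_im A B) (x n)) \<or>
      Bseq (\<lambda>n. qform (op_plus (op_re_im A B) (op_re_im U V)) (x n))"
  shows "(Bseq (\<lambda>n. Re (qform A (x n))) \<and> Bseq (\<lambda>n. Re (qform B (x n)))) \<or>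
    (Bseq (\<lambda>n. Re (qform A (x n)) + Re (qform U (x n))) \<and>
     Bseq (\<lambda>n. Re (qform B (x n)) + Re (qform V (x n))))"
  using bounded
proof (elim disjE)
  assume "Bseq (\<lambda>n. qform (op_re_im A B) (x n))"
  then show ?thesis
    using Bseq_Re Bseq_Im Re_Im_qform_op_re_im[OF A B x(1,2)] by fastforce
next
  have ops: "is_operator A" "is_operator B" "is_operator U" "is_operator V"
    using A B U V by (simp_all add: symmetric_op_is_operator)
  note plus = qform_op_plus[OF is_operator_op_re_im[OF ops(1,2)] is_operator_op_re_im[OF ops(3,4)]]
  assume "Bseq (\<lambda>n. qform (op_plus (op_re_im A B) (op_re_im U V)) (x n))"
  then show ?thesis
    using Bseq_Re Bseq_Im Re_Im_qform_op_re_im[OF A B x(1,2)] Re_Im_qform_op_re_im[OF U V x(3,4)]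
      plus x by fastforce
qed

lemma qform_re_im_perturbation_tendsto_zero:
  assumes A: "symmetric_op A" and B: "symmetric_op B" and U: "symmetric_op U" and V: "symmetric_op V"
    and cases: "(selfadjoint_op A \<and> semibounded A \<and> rel_compact U A \<and> rel_compact V A)
       \<or> (selfadjoint_op B \<and> semibounded B \<and> rel_compact U B \<and> rel_compact V B)
       \<or> (selfadjoint_op A \<and> semibounded A \<and> selfadjoint_op B \<and> semibounded B
            \<and> rel_compact U A \<and> rel_compact V B)"
    and x: "\<And>n. x n \<in> opdom (op_re_im A B)" "\<And>n. vnorm (x n) = 1" and weak: "weak_to_zero x"
    and bounded: "Bseq (\<lambda>n. qform (op_re_im A B) (x n)) \<or>
      Bseq (\<lambda>n. qform (op_plus (op_re_im A B) (op_re_im U V)) (x n))"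
  shows "(\<lambda>n. qform (op_re_im U V) (x n)) \<longlonglongrightarrow> 0"
proof -
  have xA: "\<And>n. x n \<in> opdom A" and xB: "\<And>n. x n \<in> opdom B"
    using x(1) by simp_all
  have xU: "\<And>n. x n \<in> opdom U" and xV: "\<And>n. x n \<in> opdom V"
    using cases xA xB by (auto simp: rel_compact_def)
  note bounds = Bseq_Re_qform_re_im_parts[OF A B U V xA xB xU xV bounded]
  have bounded_A: "Bseq (\<lambda>n. Re (qform A (x n)))"
    if "selfadjoint_op A" "semibounded A" "rel_compact U A"
    using bounds Bseq_Re_qform_if_perturbed[where x=x, OF that(1,2) U that(3) xA x(2)] by blast
  have bounded_B: "Bseq (\<lambda>n. Re (qform B (x n)))"
    if "selfadjoint_op B" "semibounded B" "rel_compact V B"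
    using bounds Bseq_Re_qform_if_perturbed[where x=x, OF that(1,2) V that(3) xB x(2)] by blast
  note vanish_A = qform_rel_compact_tendsto_zero[where x=x, OF _ _ _ _ xA x(2) weak]
  note vanish_B = qform_rel_compact_tendsto_zero[where x=x, OF _ _ _ _ xB x(2) weak]
  have "(\<lambda>n. qform U (x n)) \<longlonglongrightarrow> 0 \<and> (\<lambda>n. qform V (x n)) \<longlonglongrightarrow> 0"
    using cases
  proof (elim disjE conjE)
    assume "selfadjoint_op A" "semibounded A" "rel_compact U A" "rel_compact V A"
    then show ?thesis
      using vanish_A bounded_A U V by blast
  next
    assume "selfadjoint_op B" "semibounded B" "rel_compact U B" "rel_compact V B"
    then show ?thesis
      using vanish_B bounded_B U V by blast
  next
    assume "selfadjoint_op A" "semibounded A" "selfadjoint_op B" "semibounded B"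
      "rel_compact U A" "rel_compact V B"
    then show ?thesis
      using vanish_A vanish_B bounded_A bounded_B U V by blast
  qed
  then have "(\<lambda>n. qform U (x n) + \<i> * qform V (x n)) \<longlonglongrightarrow> 0"
    using tendsto_add[OF _ tendsto_mult_right_zero] by fastforce
  then show ?thesis
    using qform_op_re_im[OF symmetric_op_is_operator[OF U] symmetric_op_is_operator[OF V] xU xV]
    by simp
qed

theorem theorem4p5:
  fixes A B U V :: op
  assumes "symmetric_op A" and "symmetric_op B" and "symmetric_op U" and "symmetric_op V"
    and "(selfadjoint_op A \<and> semibounded A \<and> rel_compact U A \<and> rel_compact V A)
       \<or> (selfadjoint_op B \<and> semibounded B \<and> rel_compact U B \<and> rel_compact V B)
       \<or> (selfadjoint_op A \<and> semibounded A \<and> selfadjoint_op B \<and> semibounded B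
            \<and> rel_compact U A \<and> rel_compact V B)"
  shows "ess_num_range (op_re_im A B) = ess_num_range (op_plus (op_re_im A B) (op_re_im U V))"
proof (rule ess_num_range_op_plus_eq)
  show "is_operator (op_re_im A B)" "is_operator (op_re_im U V)"
    using assms(1-4) by (simp_all add: is_operator_op_re_im symmetric_op_is_operator)
  show "opdom (op_re_im A B) \<subseteq> opdom (op_re_im U V)"
    using assms(5) by (auto simp: rel_compact_def)
  show "(\<lambda>n. qform (op_re_im U V) (x n)) \<longlonglongrightarrow> 0"
    if "\<And>n. x n \<in> opdom (op_re_im A B)" "\<And>n. vnorm (x n) = 1" "weak_to_zero x"
      "Bseq (\<lambda>n. qform (op_re_im A B) (x n)) \<or>
       Bseq (\<lambda>n. qform (op_plus (op_re_im A B) (op_re_im U V)) (x n))" for x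
    using qform_re_im_perturbation_tendsto_zero[OF assms that] .
qed

end
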